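(* Let $K$ be a field and let $\tau \ge 2$, $M \ge 1$, $d \ge 1$ be integers. Let $b_1,\dots,b_M$, $c_1,\dots,c_M$, $r_1,\dots,r_M$, $s_1,\dots,s_M$ be integers with $0 \le c_i \le b_i$ and $1 \le s_i \le r_i \le d$ for all $1 \le i \le M$. Let $\mathcal{A} \subset \mathbb{N}^d$ be the finite set (configuration) of all $(f_1,\dots,f_d) \in \mathbb{N}^d$ such that $\sum_{j=1}^d f_j = \tau$ and $c_i \le \sum_{j=s_i}^{r_i} f_j \le b_i$ for all $1 \le i \le M$. Let $K[Y]$ be the polynomial ring over $K$ in the variables $y_{j_1 j_2 \cdots j_\tau}$, indexed by all weakly increasing sequences $1 \le j_1 \le j_2 \le \cdots \le j_\tau \le d$ such that the exponent vector of the monomial $\prod_{k=1}^{\tau} q_{j_k}$ belongs to $\mathcal{A}$, and let $I_{\mathcal{A}}$ be the kernel of the $K$-algebra homomorphism $\pi: K[Y] \to K[q_1,\dots,q_d]$, $\pi(y_{j_1\cdots j_\tau}) = \prod_{k=1}^\tau q_{j_k}$ (the toric ideal of $\mathcal{A}$). Then there exists a monomial order on $K[Y]$ such that the set $\mathcal{G}$ of all binomials $$ y_{\alpha_1 \alpha_2 \cdots \alpha_\tau}\, y_{\beta_1 \beta_2 \cdots \beta_\tau} - y_{\gamma_1 \gamma_3 \cdots \gamma_{2\tau-1}}\, y_{\gamma_2 \gamma_4 \cdots \gamma_{2\tau}}, $$ where $y_{\alpha_1\cdots\alpha_\tau}y_{\beta_1\cdots\beta_\tau}$ ranges over the non-sorted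 quadratic monomials of $K[Y]$ and $\gamma_1\gamma_2\cdots\gamma_{2\tau} = \mathrm{sort}(\alpha_1\beta_1\alpha_2\beta_2\cdots\alpha_\tau\beta_\tau)$, is the reduced Gröbner basis of $I_{\mathcal{A}}$ with respect to this order; the corresponding initial ideal is generated by squarefree quadratic (non-sorted) monomials. In particular, the set of integer vectors corresponding to the binomials in $\mathcal{G}$ is a Markov basis for $\mathcal{A}$, and it is minimal as a Markov basis.
   Context: $\mathbb{N} = \{0,1,2,\dots\}$. For a string over the alphabet $\{1,\dots,d\}$, $\mathrm{sort}(\cdot)$ denotes the string obtained by rearranging its letters into weakly increasing order. A monomial $y_{\alpha_1\cdots\alpha_\tau} y_{\beta_1\cdots\beta_\tau}\cdots y_{\gamma_1\cdots\gamma_\tau}$ in $K[Y]$ is called sorted if $\alpha_1 \le \beta_1 \le \cdots \le \gamma_1 \le \alpha_2 \le \beta_2 \le \cdots \le \gamma_2 \le \cdots \le \alpha_\tau \le \beta_\tau \le \cdots \le \gamma_\tau$. Write $\mathcal{A} = \{\mathbf{a}_1,\dots,\mathbf{a}_\nu\}$, identified with the $d \times \nu$ matrix $A$ whose columns are the $\mathbf{a}_i$; the variables of $K[Y]$ correspond bijectively to the columns of $A$. A move is a vector $\mathbf{z} \in \mathbb{Z}^\nu$ with $A\mathbf{z} = \mathbf{0}$; a binomial $\prod_i y_i^{z^+_i} - \prod_i y_i^{z^-_i}$ in $I_{\mathcal{A}}$ corresponds to the move $\mathbf{z} = \mathbf{z}^+ - \mathbf{z}^-$ (with $\mathbf{z}^\pm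 \in \mathbb{N}^\nu$). A finite set $\mathcal{B}$ of moves is a Markov basis for $\mathcal{A}$ if for every $\mathbf{t}$ the fiber $\{\mathbf{x} \in \mathbb{N}^\nu : A\mathbf{x} = \mathbf{t}\}$ is connected by steps $\mathbf{x} \mapsto \mathbf{x} \pm \mathbf{z}$, $\mathbf{z} \in \mathcal{B}$, staying in $\mathbb{N}^\nu$; it is minimal if no proper subset is a Markov basis. A Gröbner basis $\mathcal{G}$ is reduced if no monomial of any $g \in \mathcal{G}$ is divisible by the initial monomial of another $g' \in \mathcal{G}$. *)

theory Defs
  imports Main "HOL-Library.Multiset" "HOL-Library.Poly_Mapping"
begin

(* Exponent vectors f : nat => nat (only indices 1..d used) *)
definition inConfig :: "nat \<Rightarrow> nat \<Rightarrow> nat \<Rightarrow> (nat \<Rightarrow> int) \<Rightarrow> (nat \<Rightarrow> int)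
      \<Rightarrow> (nat \<Rightarrow> nat) \<Rightarrow> (nat \<Rightarrow> nat) \<Rightarrow> (nat \<Rightarrow> nat) \<Rightarrow> bool" where
  "inConfig d \<tau> M b c r s f \<longleftrightarrow>
     (\<forall>j. j \<notin> {1..d} \<longrightarrow> f j = 0) \<and>
     (\<Sum>j=1..d. f j) = \<tau> \<and>
     (\<forall>i\<in>{1..M}. c i \<le> int (\<Sum>j=s i..r i. f j) \<and> int (\<Sum>j=s i..r i. f j) \<le> b i)"

definition expvec :: "nat list \<Rightarrow> nat \<Rightarrow> nat" where
  "expvec v = (\<lambda>j. count (mset v) j)"

definition Vars :: "nat \<Rightarrow> nat \<Rightarrow> nat \<Rightarrow> (nat \<Rightarrow> int) \<Rightarrow> (nat \<Rightarrow> int)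
      \<Rightarrow> (nat \<Rightarrow> nat) \<Rightarrow> (nat \<Rightarrow> nat) \<Rightarrow> nat list set" where
  "Vars d \<tau> M b c r s = {v. length v = \<tau> \<and> sorted v \<and> set v \<subseteq> {1..d}
                              \<and> inConfig d \<tau> M b c r s (expvec v)}"

(* monomials of K[Y]: multisets of variables; polynomials: monomial \<Rightarrow>\<^sub>0 'k *)
type_synonym monom = "nat list multiset"
type_synonym 'k ypoly = "monom \<Rightarrow>\<^sub>0 'k"

definition is_monom :: "nat list set \<Rightarrow> monom \<Rightarrow> bool" where
  "is_monom V m \<longleftrightarrow> set_mset m \<subseteq> V"

definition inKY :: "nat list set \<Rightarrow> 'k::zero ypoly \<Rightarrow> bool" where
  "inKY V p \<longleftrightarrow> (\<forall>m\<in>Poly_Mapping.keys p. is_monom V m)"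

(* pi : K[Y] -> K[q_1..q_d], y_{j_1..j_tau} |-> q_{j_1}...q_{j_tau};
   monomials of K[q] represented as multisets of indices *)
definition piY :: "'k::comm_monoid_add ypoly \<Rightarrow> (nat multiset \<Rightarrow>\<^sub>0 'k)" where
  "piY p = (\<Sum>m\<in>Poly_Mapping.keys p. Poly_Mapping.single (\<Sum>\<^sub># (image_mset mset m)) (Poly_Mapping.lookup p m))"

definition toricIdeal :: "nat list set \<Rightarrow> 'k::field ypoly set" where
  "toricIdeal V = {p. inKY V p \<and> piY p = 0}"

definition monomial_order :: "nat list set \<Rightarrow> (monom \<Rightarrow> monom \<Rightarrow> bool) \<Rightarrow> bool" where
  "monomial_order V le \<longleftrightarrow>
     (\<forall>m. is_monom V m \<longrightarrow> le m m) \<and>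
     (\<forall>m1 m2. is_monom V m1 \<and> is_monom V m2 \<longrightarrow> le m1 m2 \<or> le m2 m1) \<and>
     (\<forall>m1 m2. is_monom V m1 \<and> is_monom V m2 \<and> le m1 m2 \<and> le m2 m1 \<longrightarrow> m1 = m2) \<and>
     (\<forall>m1 m2 m3. is_monom V m1 \<and> is_monom V m2 \<and> is_monom V m3 \<and> le m1 m2 \<and> le m2 m3
                   \<longrightarrow> le m1 m3) \<and>
     (\<forall>m. is_monom V m \<longrightarrow> le {#} m) \<and>
     (\<forall>m1 m2 m. is_monom V m1 \<and> is_monom V m2 \<and> is_monom V m \<and> le m1 m2
                   \<longrightarrow> le (m1 + m) (m2 + m))"

definition lm :: "(monom \<Rightarrow> monom \<Rightarrow> bool) \<Rightarrow> 'k::zero ypoly \<Rightarrow> monom" where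
  "lm le p = (THE m. m \<in> Poly_Mapping.keys p \<and> (\<forall>m'\<in>Poly_Mapping.keys p. le m' m))"

definition groebner_basis :: "(monom \<Rightarrow> monom \<Rightarrow> bool) \<Rightarrow> 'k::field ypoly set \<Rightarrow> 'k ypoly set \<Rightarrow> bool" where
  "groebner_basis le I G \<longleftrightarrow> finite G \<and> G \<subseteq> I \<and> 0 \<notin> G \<and>
     (\<forall>f\<in>I. f \<noteq> 0 \<longrightarrow> (\<exists>g\<in>G. lm le g \<subseteq># lm le f))"

definition reduced_groebner_basis :: "(monom \<Rightarrow> monom \<Rightarrow> bool) \<Rightarrow> 'k::field ypoly set \<Rightarrow> 'k ypoly set \<Rightarrow> bool" where
  "reduced_groebner_basis le I G \<longleftrightarrow> groebner_basis le I G \<and>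
     (\<forall>g\<in>G. Poly_Mapping.lookup g (lm le g) = 1) \<and>
     (\<forall>g\<in>G. \<forall>g'\<in>G. g \<noteq> g' \<longrightarrow> (\<forall>m\<in>Poly_Mapping.keys g. \<not> lm le g' \<subseteq># m))"

(* sorted monomial: factors can be ordered v_1,...,v_k so that
   v_1!0 \<le> v_2!0 \<le> ... \<le> v_k!0 \<le> v_1!1 \<le> ... *)
definition sorted_monom :: "monom \<Rightarrow> bool" where
  "sorted_monom m \<longleftrightarrow> (\<exists>ls. mset ls = m \<and> sorted (concat (transpose ls)))"

(* gamma = sort(alpha_1 beta_1 ... alpha_tau beta_tau); odd and even positions *)
definition gam :: "nat list \<Rightarrow> nat list \<Rightarrow> nat list" where
  "gam \<alpha> \<beta> = sort (concat (transpose [\<alpha>, \<beta>]))"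

definition oddpart :: "nat \<Rightarrow> nat list \<Rightarrow> nat list \<Rightarrow> nat list" where
  "oddpart \<tau> \<alpha> \<beta> = map (\<lambda>k. gam \<alpha> \<beta> ! (2*k)) [0..<\<tau>]"

definition evenpart :: "nat \<Rightarrow> nat list \<Rightarrow> nat list \<Rightarrow> nat list" where
  "evenpart \<tau> \<alpha> \<beta> = map (\<lambda>k. gam \<alpha> \<beta> ! (2*k+1)) [0..<\<tau>]"

definition nonsorted_quad :: "nat list set \<Rightarrow> nat list \<Rightarrow> nat list \<Rightarrow> bool" where
  "nonsorted_quad V \<alpha> \<beta> \<longleftrightarrow> \<alpha> \<in> V \<and> \<beta> \<in> V \<and> \<not> sorted_monom {#\<alpha>, \<beta>#}"

definition binom :: "nat \<Rightarrow> nat list \<Rightarrow> nat list \<Rightarrow> 'k::comm_ring_1 ypoly" where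
  "binom \<tau> \<alpha> \<beta> = Poly_Mapping.single {#\<alpha>, \<beta>#} 1
                  - Poly_Mapping.single {#oddpart \<tau> \<alpha> \<beta>, evenpart \<tau> \<alpha> \<beta>#} 1"

definition Gset :: "nat list set \<Rightarrow> nat \<Rightarrow> 'k::comm_ring_1 ypoly set" where
  "Gset V \<tau> = {binom \<tau> \<alpha> \<beta> | \<alpha> \<beta>. nonsorted_quad V \<alpha> \<beta>}"

definition binom_move :: "nat \<Rightarrow> nat list \<Rightarrow> nat list \<Rightarrow> nat list \<Rightarrow> int" where
  "binom_move \<tau> \<alpha> \<beta> = (\<lambda>v. int (count {#\<alpha>, \<beta>#} v)
                         - int (count {#oddpart \<tau> \<alpha> \<beta>, evenpart \<tau> \<alpha> \<beta>#} v))"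

definition Bset :: "nat list set \<Rightarrow> nat \<Rightarrow> (nat list \<Rightarrow> int) set" where
  "Bset V \<tau> = {binom_move \<tau> \<alpha> \<beta> | \<alpha> \<beta>. nonsorted_quad V \<alpha> \<beta>}"

(* Markov bases. Vectors in Z^nu: functions on nat list vanishing outside V *)
definition Amap :: "nat list set \<Rightarrow> (nat list \<Rightarrow> int) \<Rightarrow> nat \<Rightarrow> int" where
  "Amap V x = (\<lambda>j. \<Sum>v\<in>V. x v * int (expvec v j))"

definition is_move :: "nat list set \<Rightarrow> (nat list \<Rightarrow> int) \<Rightarrow> bool" where
  "is_move V z \<longleftrightarrow> (\<forall>v. v \<notin> V \<longrightarrow> z v = 0) \<and> Amap V z = (\<lambda>_. 0)"

definition fiber :: "nat list set \<Rightarrow> (nat \<Rightarrow> int) \<Rightarrow> (nat list \<Rightarrow> int) set" where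
  "fiber V t = {x. (\<forall>v. 0 \<le> x v) \<and> (\<forall>v. v \<notin> V \<longrightarrow> x v = 0) \<and> Amap V x = t}"

definition markov_step :: "nat list set \<Rightarrow> (nat \<Rightarrow> int) \<Rightarrow> (nat list \<Rightarrow> int) set
      \<Rightarrow> ((nat list \<Rightarrow> int) \<times> (nat list \<Rightarrow> int)) set" where
  "markov_step V t B = {(x, y). x \<in> fiber V t \<and> y \<in> fiber V t \<and>
                                 (\<exists>z\<in>B. y = (\<lambda>v. x v + z v) \<or> y = (\<lambda>v. x v - z v))}"

definition markov_basis :: "nat list set \<Rightarrow> (nat list \<Rightarrow> int) set \<Rightarrow> bool" where
  "markov_basis V B \<longleftrightarrow> finite B \<and> (\<forall>z\<in>B. is_move V z) \<and>
     (\<forall>t. \<forall>x\<in>fiber V t. \<forall>y\<in>fiber V t. (x, y) \<in> (markov_step V t B)\<^sup>*)"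

definition minimal_markov_basis :: "nat list set \<Rightarrow> (nat list \<Rightarrow> int) set \<Rightarrow> bool" where
  "minimal_markov_basis V B \<longleftrightarrow> markov_basis V B \<and> (\<forall>B'. B' \<subset> B \<longrightarrow> \<not> markov_basis V B')"

end

theory Submission
  imports Defs "HOL-Library.List_Lexorder" "HOL-Library.Multiset_Order"
    "HOL-Library.Product_Lexorder" "HOL-Library.Product_Plus"
begin

text \<open>
  The binomials of \<open>Gset\<close> replace a non-sorted pair of words by the two halves of their merged
  sorted word (sort-splitting). Writing \<open>C\<^sub>h(w)\<close> for the number of letters \<open>\<le> h\<close> of \<open>w\<close>,
  sort-splitting replaces \<open>C\<^sub>h(\<alpha>), C\<^sub>h(\<beta>)\<close> by their rounded-up and rounded-down average. The configuration is closed under sort-splitting, since its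
  interval constraints bound differences of such counts, and these bounds survive averaging.
  Sort-splitting strictly decreases the potential \<open>(\<Sum>\<^sub>h C\<^sub>h\<^sup>2, -(\<Sum>\<^sub>h C\<^sub>h)\<^sup>2)\<close> in the
  lexicographic order, so every monomial reduces to a sorted one. And a sorted monomial is
  determined by its image under \<open>\<pi>\<close>, because reading its words column by column gives the sorted
  list of all its letters. Ordering monomials lexicographically by image, potential and finally
  the monomial itself yields a monomial order in which every non-sorted quadratic monomial leads
  a binomial of \<open>Gset\<close>, while a nonzero element of the toric ideal cannot have a sorted leading
  monomial; this gives the reduced Groebner basis. The same reductions join any two points of a
  fibre through its unique sorted monomial, and the moves are indispensable because the fibre
  \<open>{y\<^sub>\<alpha> y\<^sub>\<beta>, sorted partner}\<close> can only be left by the move of \<open>\<alpha>, \<beta>\<close> itself.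
\<close>

section \<open>Sort-splitting two words\<close>

fun interleave :: "'a list \<Rightarrow> 'a list \<Rightarrow> 'a list" where
  "interleave (x # xs) (y # ys) = x # y # interleave xs ys"
| "interleave _ _ = []"

lemma concat_transpose_pair:
  "length xs = length ys \<Longrightarrow> concat (transpose [xs, ys]) = interleave xs ys"
  by (induction xs ys rule: interleave.induct) auto

lemma length_interleave: "length xs = length ys \<Longrightarrow> length (interleave xs ys) = 2 * length xs"
  by (induction xs ys rule: interleave.induct) auto

lemma mset_interleave: "length xs = length ys \<Longrightarrow> mset (interleave xs ys) = mset xs + mset ys"
  by (induction xs ys rule: interleave.induct) auto

lemma nth_interleave_even:
  "length xs = length ys \<Longrightarrow> i < length xs \<Longrightarrow> interleave xs ys ! (2 * i) = xs ! i"
  by (induction xs ys arbitrary: i rule: interleave.induct) (auto simp: nth_Cons split: nat.split)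

lemma nth_interleave_odd:
  "length xs = length ys \<Longrightarrow> i < length xs \<Longrightarrow> interleave xs ys ! (2 * i + 1) = ys ! i"
  by (induction xs ys arbitrary: i rule: interleave.induct) (auto simp: nth_Cons split: nat.split)

lemma interleave_evens_odds:
  assumes "length xs = 2 * n"
  shows "interleave (map (\<lambda>k. xs ! (2 * k)) [0..<n]) (map (\<lambda>k. xs ! (2 * k + 1)) [0..<n]) = xs"
    (is "interleave ?evens ?odds = _")
proof (rule nth_equalityI)
  show "length (interleave ?evens ?odds) = length xs" using assms by (simp add: length_interleave)
  fix p assume "p < length (interleave ?evens ?odds)"
  then have "p div 2 < n" by (simp add: length_interleave)
  moreover have "p = 2 * (p div 2) \<or> p = 2 * (p div 2) + 1" by presburger
  ultimately show "interleave ?evens ?odds ! p = xs ! p"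
    by (metis (no_types, lifting) diff_zero length_map length_upt nth_interleave_even
        nth_interleave_odd nth_map_upt add_0)
qed

lemma sorted_map_nth_mono:
  assumes "sorted xs" "mono f" "\<And>k. k < n \<Longrightarrow> f k < length xs"
  shows "sorted (map (\<lambda>k. xs ! f k) [0..<n])"
  using assms by (auto simp: sorted_iff_nth_mono intro!: sorted_nth_mono dest: monoD)

lemma sorted_gam: "sorted (gam \<alpha> \<beta>)"
  by (simp add: gam_def)

lemma mset_gam: "length \<alpha> = length \<beta> \<Longrightarrow> mset (gam \<alpha> \<beta>) = mset \<alpha> + mset \<beta>"
  by (simp add: gam_def concat_transpose_pair mset_interleave)

lemma length_gam: "length \<alpha> = length \<beta> \<Longrightarrow> length (gam \<alpha> \<beta>) = 2 * length \<alpha>"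
  by (simp add: gam_def concat_transpose_pair length_interleave)

lemma gam_commute: "length \<alpha> = length \<beta> \<Longrightarrow> gam \<alpha> \<beta> = gam \<beta> \<alpha>"
  by (metis add.commute gam_def mset_gam properties_for_sort sorted_sort)

lemma oddpart_commute: "length \<alpha> = length \<beta> \<Longrightarrow> oddpart \<tau> \<alpha> \<beta> = oddpart \<tau> \<beta> \<alpha>"
  by (simp add: oddpart_def gam_commute)

lemma evenpart_commute: "length \<alpha> = length \<beta> \<Longrightarrow> evenpart \<tau> \<alpha> \<beta> = evenpart \<tau> \<beta> \<alpha>"
  by (simp add: evenpart_def gam_commute)

lemma length_oddpart [simp]: "length (oddpart \<tau> \<alpha> \<beta>) = \<tau>"
  and length_evenpart [simp]: "length (evenpart \<tau> \<alpha> \<beta>) = \<tau>"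
  by (simp_all add: oddpart_def evenpart_def)

lemma interleave_oddpart_evenpart:
  "length \<alpha> = \<tau> \<Longrightarrow> length \<beta> = \<tau> \<Longrightarrow> interleave (oddpart \<tau> \<alpha> \<beta>) (evenpart \<tau> \<alpha> \<beta>) = gam \<alpha> \<beta>"
  unfolding oddpart_def evenpart_def by (rule interleave_evens_odds) (simp add: length_gam)

lemma mset_oddpart_evenpart:
  "length \<alpha> = \<tau> \<Longrightarrow> length \<beta> = \<tau> \<Longrightarrow>
    mset (oddpart \<tau> \<alpha> \<beta>) + mset (evenpart \<tau> \<alpha> \<beta>) = mset \<alpha> + mset \<beta>"
  by (metis interleave_oddpart_evenpart length_evenpart length_oddpart mset_gam mset_interleave)

lemma set_oddpart_union_evenpart:
  "length \<alpha> = \<tau> \<Longrightarrow> length \<beta> = \<tau> \<Longrightarrow>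
    set (oddpart \<tau> \<alpha> \<beta>) \<union> set (evenpart \<tau> \<alpha> \<beta>) = set \<alpha> \<union> set \<beta>"
  by (metis mset_oddpart_evenpart set_mset_mset set_mset_union)

lemma sorted_oddpart: "length \<alpha> = \<tau> \<Longrightarrow> length \<beta> = \<tau> \<Longrightarrow> sorted (oddpart \<tau> \<alpha> \<beta>)"
  unfolding oddpart_def by (rule sorted_map_nth_mono) (auto simp: sorted_gam length_gam mono_def)

lemma sorted_evenpart: "length \<alpha> = \<tau> \<Longrightarrow> length \<beta> = \<tau> \<Longrightarrow> sorted (evenpart \<tau> \<alpha> \<beta>)"
  unfolding evenpart_def by (rule sorted_map_nth_mono) (auto simp: sorted_gam length_gam mono_def)

lemma sorted_monom_oddpart_evenpart:
  "length \<alpha> = \<tau> \<Longrightarrow> length \<beta> = \<tau> \<Longrightarrow> sorted_monom {#oddpart \<tau> \<alpha> \<beta>, evenpart \<tau> \<alpha> \<beta>#}"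
  unfolding sorted_monom_def
  by (rule exI[of _ "[oddpart \<tau> \<alpha> \<beta>, evenpart \<tau> \<alpha> \<beta>]"])
    (simp add: concat_transpose_pair interleave_oddpart_evenpart sorted_gam)

lemma sorted_monom_pair:
  assumes "length u = length v" "sorted_monom {#u, v#}"
  shows "sorted (interleave u v) \<or> sorted (interleave v u)"
proof -
  obtain ls where ls: "mset ls = {#u, v#}" "sorted (concat (transpose ls))"
    using assms(2) unfolding sorted_monom_def by blast
  moreover have "length ls = 2" using arg_cong[OF ls(1), of size] by simp
  ultimately have "ls = [u, v] \<or> ls = [v, u]"
    by (auto simp: numeral_2_eq_2 length_Suc_conv add_eq_conv_ex)
  then show ?thesis using ls(2) assms(1) by (auto simp: concat_transpose_pair)
qed

section \<open>Counting letters up to a bound\<close>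

definition count_atMost :: "nat list \<Rightarrow> nat \<Rightarrow> nat" where
  "count_atMost v h = length (filter (\<lambda>x. x \<le> h) v)"

lemma count_atMost_conv_mset: "count_atMost v h = size (filter_mset (\<lambda>x. x \<le> h) (mset v))"
  by (metis count_atMost_def mset_filter size_mset)

lemma count_atMost_le_length: "count_atMost v h \<le> length v"
  by (simp add: count_atMost_def)

lemma count_atMost_mono: "h \<le> h' \<Longrightarrow> count_atMost v h \<le> count_atMost v h'"
  unfolding count_atMost_def by (induction v) auto

lemma count_atMost_eq_length: "set v \<subseteq> {..d} \<Longrightarrow> d \<le> h \<Longrightarrow> count_atMost v h = length v"
  unfolding count_atMost_def by (induction v) auto

lemma sum_count_atMost: "(\<Sum>j\<le>h. count (mset v) j) = count_atMost v h"
proof (induction v)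
  case (Cons x v)
  have "(\<Sum>j\<le>h. count (mset (x # v)) j) = (\<Sum>j\<le>h. count (mset v) j + (if x = j then 1 else 0))"
    by (rule sum.cong) auto
  then show ?case using Cons.IH by (simp add: sum.distrib count_atMost_def)
qed (simp add: count_atMost_def)

lemma sum_count_atLeastAtMost:
  assumes "1 \<le> s" "s \<le> r"
  shows "(\<Sum>j=s..r. count (mset v) j) = count_atMost v r - count_atMost v (s - 1)"
proof -
  have "{..r} = {..s - 1} \<union> {s..r}" using assms by auto
  then have "(\<Sum>j\<le>r. count (mset v) j) = (\<Sum>j\<le>s - 1. count (mset v) j) + (\<Sum>j=s..r. count (mset v) j)"
    using assms by (simp add: sum.union_disjoint)
  then show ?thesis by (simp add: sum_count_atMost)
qed

lemma sorted_eq_if_count_atMost_eq: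
  assumes "sorted u" "sorted v" "set u \<subseteq> {..d}" "set v \<subseteq> {..d}" "length u = length v"
    and "\<And>h. h \<le> d \<Longrightarrow> count_atMost u h = count_atMost v h"
  shows "u = v"
proof -
  have counts: "count_atMost u h = count_atMost v h" for h
    using assms(3-6) count_atMost_eq_length by (cases "h \<le> d") auto
  have "count (mset u) x = count (mset v) x" for x
  proof (cases x)
    case 0
    then show ?thesis using sum_count_atMost[where h = 0] counts by simp
  next
    case (Suc y)
    have "count (mset w) x = count_atMost w x - count_atMost w y" for w
      using sum_count_atMost[of w x] sum_count_atMost[of w y] Suc by simp
    then show ?thesis using counts by simp
  qed
  then show ?thesis
    by (metis assms(1,2) multiset_eqI properties_for_sort sorted_sort_id)
qed

lemma sorted_nth_le_iff:
  assumes "sorted g" "p < length g"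
  shows "g ! p \<le> h \<longleftrightarrow> p < count_atMost g h"
proof -
  have count: "count_atMost g h = card {i. i < length g \<and> g ! i \<le> h}"
    by (simp add: count_atMost_def length_filter_conv_card)
  show ?thesis
  proof
    assume "g ! p \<le> h"
    then have "{..p} \<subseteq> {i. i < length g \<and> g ! i \<le> h}"
      using assms by (auto simp: sorted_iff_nth_mono) (meson le_trans)
    then show "p < count_atMost g h" unfolding count
      by (metis card_atMost card_mono finite_Collect_conjI finite_Collect_less_nat Suc_le_eq)
  next
    assume "p < count_atMost g h"
    moreover have "\<not> g ! p \<le> h \<Longrightarrow> {i. i < length g \<and> g ! i \<le> h} \<subseteq> {..<p}"
      using assms by (auto simp: sorted_iff_nth_mono) (meson le_trans not_le_imp_less)
    ultimately show "g ! p \<le> h" unfolding count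
      by (metis card_lessThan card_mono finite_lessThan leD)
  qed
qed

lemma count_atMost_oddpart_evenpart:
  assumes "length \<alpha> = \<tau>" "length \<beta> = \<tau>"
  shows "count_atMost (oddpart \<tau> \<alpha> \<beta>) h = (count_atMost \<alpha> h + count_atMost \<beta> h + 1) div 2"
    and "count_atMost (evenpart \<tau> \<alpha> \<beta>) h = (count_atMost \<alpha> h + count_atMost \<beta> h) div 2"
proof -
  let ?g = "gam \<alpha> \<beta>"
  define n where "n = count_atMost \<alpha> h + count_atMost \<beta> h"
  have n: "count_atMost ?g h = n" using assms by (simp add: count_atMost_conv_mset mset_gam n_def)
  have len: "length ?g = 2 * \<tau>" using assms by (simp add: length_gam)
  then have "n \<le> 2 * \<tau>" using count_atMost_le_length[of ?g h] n by simp
  have nth_le: "?g ! p \<le> h \<longleftrightarrow> p < n" if "p < 2 * \<tau>" for p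
    using sorted_nth_le_iff[OF sorted_gam] len n that by simp
  have "count_atMost (oddpart \<tau> \<alpha> \<beta>) h = card {k. k < \<tau> \<and> ?g ! (2 * k) \<le> h}"
    by (simp add: count_atMost_def length_filter_conv_card oddpart_def cong: conj_cong)
  also have "\<dots> = card {k. k < \<tau> \<and> 2 * k < n}"
    by (rule arg_cong[where f = card]) (auto simp: nth_le)
  also have "{k. k < \<tau> \<and> 2 * k < n} = {..<(n + 1) div 2}"
    using \<open>n \<le> 2 * \<tau>\<close> by auto
  finally show "count_atMost (oddpart \<tau> \<alpha> \<beta>) h = (count_atMost \<alpha> h + count_atMost \<beta> h + 1) div 2"
    by (simp add: n_def)
  have "count_atMost (evenpart \<tau> \<alpha> \<beta>) h = card {k. k < \<tau> \<and> ?g ! (2 * k + 1) \<le> h}"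
    by (simp add: count_atMost_def length_filter_conv_card evenpart_def cong: conj_cong)
  also have "\<dots> = card {k. k < \<tau> \<and> 2 * k + 1 < n}"
    by (rule arg_cong[where f = card]) (auto simp: nth_le)
  also have "{k. k < \<tau> \<and> 2 * k + 1 < n} = {..<n div 2}"
    using \<open>n \<le> 2 * \<tau>\<close> by auto
  finally show "count_atMost (evenpart \<tau> \<alpha> \<beta>) h = (count_atMost \<alpha> h + count_atMost \<beta> h) div 2"
    by (simp add: n_def)
qed

section \<open>A potential decreased by sort-splitting\<close>

lemma sum_sq_halves:
  fixes a b :: nat
  shows "((a + b + 1) div 2)^2 + ((a + b) div 2)^2 \<le> a^2 + b^2"
    and "((a + b + 1) div 2)^2 + ((a + b) div 2)^2 = a^2 + b^2 \<Longrightarrow>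
      (a + b + 1) div 2 = max a b \<and> (a + b) div 2 = min a b"
proof -
  define x k where "x = min a b" and "k = max a b - min a b"
  define p q where "p = (k + 1) div 2" and "q = k div 2"
  have "a + b = 2 * x + k" by (simp add: x_def k_def min_def max_def)
  then have halves: "(a + b + 1) div 2 = x + p" "(a + b) div 2 = x + q"
    by (simp_all add: p_def q_def)
  have "k = p + q" "q \<le> p" by (simp_all add: p_def q_def)
  have "a^2 + b^2 = x^2 + (x + k)^2"
    by (cases "a \<le> b") (simp_all add: x_def k_def min_def max_def)
  then have gap: "a^2 + b^2 = (x + p)^2 + (x + q)^2 + 2 * p * q"
    unfolding \<open>k = p + q\<close> by (simp add: power2_eq_square algebra_simps)
  show "((a + b + 1) div 2)^2 + ((a + b) div 2)^2 \<le> a^2 + b^2"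
    unfolding halves gap by simp
  assume "((a + b + 1) div 2)^2 + ((a + b) div 2)^2 = a^2 + b^2"
  then have "q = 0" using \<open>q \<le> p\<close> unfolding halves gap by auto
  then show "(a + b + 1) div 2 = max a b \<and> (a + b) div 2 = min a b"
    using halves \<open>k = p + q\<close> by (simp add: x_def k_def)
qed

lemma sum_sq_le_of_spread:
  fixes a b p q :: nat
  assumes "p + q = a + b" "a \<le> p" "b \<le> p"
  shows "a^2 + b^2 \<le> p^2 + q^2"
    and "a^2 + b^2 = p^2 + q^2 \<Longrightarrow> p = a \<or> p = b"
proof -
  obtain x where "p = a + x" using assms(2) le_Suc_ex by blast
  moreover from this have "b = q + x" using assms(1) by simp
  moreover from this obtain y where "a = q + y" using assms(3) \<open>p = a + x\<close> le_Suc_ex by fastforce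
  ultimately have gap: "p^2 + q^2 = a^2 + b^2 + 2 * x * y"
    by (simp add: power2_eq_square algebra_simps)
  show "a^2 + b^2 \<le> p^2 + q^2" using gap by simp
  assume "a^2 + b^2 = p^2 + q^2"
  then have "x = 0 \<or> y = 0" using gap by simp
  then show "p = a \<or> p = b" using \<open>p = a + x\<close> \<open>a = q + y\<close> \<open>b = q + x\<close> by auto
qed

instance prod :: (ordered_cancel_ab_semigroup_add, ordered_cancel_ab_semigroup_add)
  ordered_cancel_ab_semigroup_add
  by standard (auto simp: less_eq_prod_def add_strict_left_mono add_left_mono)

lemma sum_sq_counts_sort_split:
  assumes "length \<alpha> = \<tau>" "length \<beta> = \<tau>"
  defines "lhs \<equiv> \<lambda>h. (count_atMost (oddpart \<tau> \<alpha> \<beta>) h)^2 + (count_atMost (evenpart \<tau> \<alpha> \<beta>) h)^2"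
    and "rhs \<equiv> \<lambda>h. (count_atMost \<alpha> h)^2 + (count_atMost \<beta> h)^2"
  shows "(\<Sum>h\<le>d. lhs h) \<le> (\<Sum>h\<le>d. rhs h)"
    and "(\<Sum>h\<le>d. lhs h) = (\<Sum>h\<le>d. rhs h) \<Longrightarrow> h \<le> d \<Longrightarrow>
      count_atMost (oddpart \<tau> \<alpha> \<beta>) h = max (count_atMost \<alpha> h) (count_atMost \<beta> h) \<and>
      count_atMost (evenpart \<tau> \<alpha> \<beta>) h = min (count_atMost \<alpha> h) (count_atMost \<beta> h)"
proof -
  have pointwise: "lhs h \<le> rhs h" for h
    unfolding lhs_def rhs_def count_atMost_oddpart_evenpart[OF assms(1,2)] by (rule sum_sq_halves(1))
  then show "(\<Sum>h\<le>d. lhs h) \<le> (\<Sum>h\<le>d. rhs h)" by (rule sum_mono)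
  assume "(\<Sum>h\<le>d. lhs h) = (\<Sum>h\<le>d. rhs h)" "h \<le> d"
  then have "lhs h = rhs h" using sum_mono_inv[of lhs "{..d}" rhs h] pointwise by simp
  then show "count_atMost (oddpart \<tau> \<alpha> \<beta>) h = max (count_atMost \<alpha> h) (count_atMost \<beta> h) \<and>
      count_atMost (evenpart \<tau> \<alpha> \<beta>) h = min (count_atMost \<alpha> h) (count_atMost \<beta> h)"
    using sum_sq_halves(2) unfolding lhs_def rhs_def count_atMost_oddpart_evenpart[OF assms(1,2)]
    by blast
qed

lemma max_min_eq_if_sum_sq_le:
  fixes a b c e :: "nat \<Rightarrow> nat"
  assumes extreme: "\<And>h. h \<le> d \<Longrightarrow> c h = max (a h) (b h) \<and> e h = min (a h) (b h)"
    and "(\<Sum>h\<le>d. c h)^2 + (\<Sum>h\<le>d. e h)^2 \<le> (\<Sum>h\<le>d. a h)^2 + (\<Sum>h\<le>d. b h)^2"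
  shows "(\<forall>h\<le>d. c h = a h \<and> e h = b h) \<or> (\<forall>h\<le>d. c h = b h \<and> e h = a h)"
proof -
  have sums: "sum c {..d} + sum e {..d} = sum a {..d} + sum b {..d}"
    unfolding sum.distrib[symmetric] by (rule sum.cong) (auto simp: extreme)
  have below: "a h \<le> c h" "b h \<le> c h" if "h \<le> d" for h
    using extreme[OF that] by simp_all
  then have "sum a {..d} \<le> sum c {..d}" "sum b {..d} \<le> sum c {..d}"
    by (auto intro: sum_mono)
  note spread = sums this
  have "(\<Sum>h\<le>d. a h)^2 + (\<Sum>h\<le>d. b h)^2 = (\<Sum>h\<le>d. c h)^2 + (\<Sum>h\<le>d. e h)^2"
    using sum_sq_le_of_spread(1)[OF spread] assms(2) by linarith
  then have "sum c {..d} = sum a {..d} \<or> sum c {..d} = sum b {..d}"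
    by (rule sum_sq_le_of_spread(2)[OF spread])
  moreover have "\<forall>h\<le>d. c h = f h \<and> e h = g h"
    if "sum c {..d} = sum f {..d}" "f = a \<and> g = b \<or> f = b \<and> g = a" for f g
  proof (intro allI impI)
    fix h assume "h \<le> d"
    then have "f h = c h" using sum_mono_inv[of f "{..d}" c h] that below by auto
    then show "c h = f h \<and> e h = g h" using extreme[OF \<open>h \<le> d\<close>] that(2) by auto
  qed
  ultimately show ?thesis by blast
qed

definition potential :: "nat \<Rightarrow> nat list \<Rightarrow> nat \<times> int" where
  "potential d v = ((\<Sum>h\<le>d. (count_atMost v h)^2), - int ((\<Sum>h\<le>d. count_atMost v h)^2))"

lemma potential_sort_split_less:
  fixes \<alpha> \<beta> :: "nat list" and \<tau> d :: nat
  defines "ov \<equiv> oddpart \<tau> \<alpha> \<beta>" and "ev \<equiv> evenpart \<tau> \<alpha> \<beta>"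
  assumes len: "length \<alpha> = \<tau>" "length \<beta> = \<tau>" and sorted: "sorted \<alpha>" "sorted \<beta>"
    and bound: "set \<alpha> \<subseteq> {..d}" "set \<beta> \<subseteq> {..d}"
    and changed: "{#\<alpha>, \<beta>#} \<noteq> {#ov, ev#}"
  shows "potential d ov + potential d ev < potential d \<alpha> + potential d \<beta>"
proof (rule ccontr)
  assume not_less: "\<not> ?thesis"
  note sq_sums = sum_sq_counts_sort_split[OF len, where d = d, folded ov_def ev_def]
  have "(\<Sum>h\<le>d. (count_atMost ov h)^2 + (count_atMost ev h)^2)
      = (\<Sum>h\<le>d. (count_atMost \<alpha> h)^2 + (count_atMost \<beta> h)^2)"
    using not_less sq_sums(1) by (simp add: potential_def sum.distrib)
  note extreme = sq_sums(2)[OF this]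
  have "(\<Sum>h\<le>d. count_atMost ov h)^2 + (\<Sum>h\<le>d. count_atMost ev h)^2
      \<le> (\<Sum>h\<le>d. count_atMost \<alpha> h)^2 + (\<Sum>h\<le>d. count_atMost \<beta> h)^2"
    using not_less sq_sums(1) by (simp add: potential_def sum.distrib del: of_nat_sum of_nat_power)
  then have "(\<forall>h\<le>d. count_atMost ov h = count_atMost \<alpha> h \<and> count_atMost ev h = count_atMost \<beta> h) \<or>
      (\<forall>h\<le>d. count_atMost ov h = count_atMost \<beta> h \<and> count_atMost ev h = count_atMost \<alpha> h)"
    using extreme by (intro max_min_eq_if_sum_sq_le) auto
  moreover have "ov = \<gamma> \<and> ev = \<delta>"
    if counts: "\<forall>h\<le>d. count_atMost ov h = count_atMost \<gamma> h \<and> count_atMost ev h = count_atMost \<delta> h"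
      and "\<gamma> \<in> {\<alpha>, \<beta>}" "\<delta> \<in> {\<alpha>, \<beta>}" for \<gamma> \<delta>
  proof -
    have "sorted ov" "sorted ev" "set ov \<subseteq> {..d}" "set ev \<subseteq> {..d}" "length ov = \<tau>" "length ev = \<tau>"
      using sorted_oddpart[OF len] sorted_evenpart[OF len] set_oddpart_union_evenpart[OF len] bound
      by (auto simp: ov_def ev_def)
    moreover have "sorted \<gamma>" "sorted \<delta>" "set \<gamma> \<subseteq> {..d}" "set \<delta> \<subseteq> {..d}" "length \<gamma> = \<tau>" "length \<delta> = \<tau>"
      using that(2,3) sorted bound len by auto
    ultimately show ?thesis
      using counts by (auto intro!: sorted_eq_if_count_atMost_eq[where d = d])
  qed
  ultimately have "ov = \<alpha> \<and> ev = \<beta> \<or> ov = \<beta> \<and> ev = \<alpha>" by blast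
  then show False using changed add_mset_commute[of \<alpha> \<beta> "{#}"] by auto
qed

section \<open>Sorted monomials are determined by their image\<close>

definition pi_monom :: "monom \<Rightarrow> nat multiset" where
  "pi_monom m = \<Sum>\<^sub># (image_mset mset m)"

definition pairwise_sorted :: "monom \<Rightarrow> bool" where
  "pairwise_sorted m \<longleftrightarrow> (\<forall>u v. {#u, v#} \<subseteq># m \<longrightarrow> sorted_monom {#u, v#})"

lemma pi_monom_empty [simp]: "pi_monom {#} = {#}"
  and pi_monom_add [simp]: "pi_monom (m1 + m2) = pi_monom m1 + pi_monom m2"
  and pi_monom_pair [simp]: "pi_monom {#u, v#} = mset u + mset v"
  by (simp_all add: pi_monom_def)

lemma set_interleave: "length xs = length ys \<Longrightarrow> set (interleave xs ys) = set xs \<union> set ys"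
  by (metis mset_interleave set_mset_mset set_mset_union)

lemma sorted_interleave_self: "sorted xs \<Longrightarrow> sorted (interleave xs xs)"
  by (induction xs) (auto simp: set_interleave)

lemma sorted_interleave_nth:
  assumes "sorted (interleave u v)" "length u = length v" "i < length u"
  shows "u ! i \<le> v ! i" and "Suc i < length u \<Longrightarrow> v ! i \<le> u ! Suc i"
proof -
  have len: "length (interleave u v) = 2 * length u" using assms(2) by (rule length_interleave)
  show "u ! i \<le> v ! i"
    using sorted_nth_mono[OF assms(1), of "2 * i" "2 * i + 1"] assms len
      nth_interleave_even[of u v i] nth_interleave_odd[of u v i]
    by simp
  show "v ! i \<le> u ! Suc i" if "Suc i < length u"
    using sorted_nth_mono[OF assms(1), of "2 * i + 1" "2 * Suc i"] assms len that
      nth_interleave_even[of u v "Suc i"] nth_interleave_odd[of u v i]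
    by simp
qed

lemma eq_if_nth_le_and_sum_list_le:
  fixes u v :: "nat list"
  assumes "length u = length v" "\<And>i. i < length u \<Longrightarrow> u ! i \<le> v ! i" "sum_list v \<le> sum_list u"
  shows "u = v"
proof -
  have "(\<Sum>i<length u. u ! i) \<le> (\<Sum>i<length u. v ! i)" by (rule sum_mono) (use assms(2) in auto)
  then have "(\<Sum>i<length u. u ! i) = (\<Sum>i<length u. v ! i)"
    using assms(1,3) by (simp add: sum_list_sum_nth atLeast0LessThan)
  then show ?thesis
    using sum_mono_inv[of "\<lambda>i. u ! i" "{..<length u}" "\<lambda>i. v ! i"] assms(1,2)
    by (auto intro: nth_equalityI)
qed

lemma sorted_interleave_sorted_by_sum:
  assumes rows: "\<forall>u\<in>set ls. length u = \<tau> \<and> sorted u" and by_sum: "sorted (map sum_list ls)"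
    and pairs: "pairwise_sorted (mset ls)" and "j \<le> j'" "j' < length ls"
  shows "sorted (interleave (ls ! j) (ls ! j'))"
proof (cases "ls ! j = ls ! j'")
  case True
  then show ?thesis using rows assms(5) by (simp add: sorted_interleave_self)
next
  case False
  have j: "length (ls ! j) = \<tau>" "length (ls ! j') = \<tau>" "sorted (ls ! j)"
    using rows assms(4,5) by auto
  have "{#ls ! j, ls ! j'#} \<subseteq># mset ls"
    using False assms(4,5) by (auto simp: insert_subset_eq_iff in_diff_count)
  then have "sorted (interleave (ls ! j) (ls ! j')) \<or> sorted (interleave (ls ! j') (ls ! j))"
    using pairs j by (intro sorted_monom_pair) (auto simp: pairwise_sorted_def)
  moreover have "sum_list (ls ! j) \<le> sum_list (ls ! j')"
    using sorted_nth_mono[OF by_sum assms(4)] assms(4,5) by simp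
  ultimately show ?thesis
    using eq_if_nth_le_and_sum_list_le[of "ls ! j'" "ls ! j"] sorted_interleave_nth(1) j False
    by metis
qed

lemma length_concat_map_upt:
  "(\<And>i. i < n \<Longrightarrow> length (B i) = k) \<Longrightarrow> length (concat (map B [0..<n])) = n * k"
  by (induction n) auto

lemma nth_concat_map_upt:
  assumes "\<And>i. i < n \<Longrightarrow> length (B i) = k" "i < n" "j < k"
  shows "concat (map B [0..<n]) ! (i * k + j) = B i ! j"
  using assms
proof (induction n)
  case (Suc n)
  have "length (concat (map B [0..<n])) = n * k"
    using Suc.prems(1) by (intro length_concat_map_upt) simp
  moreover have "i * k + j < n * k" if "i < n"
  proof -
    have "i * k + j < Suc i * k" using Suc.prems(3) by simp
    also have "\<dots> \<le> n * k" using that by (intro mult_le_mono1) simp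
    finally show ?thesis .
  qed
  ultimately show ?case
  proof (cases "i < n")
    case False
    with Suc.prems(2) have "i = n" by simp
    then show ?thesis using \<open>length (concat (map B [0..<n])) = n * k\<close> by (simp add: nth_append)
  qed (use Suc in \<open>simp add: nth_append\<close>)
qed simp

lemma concat_transpose_rectangle:
  assumes "\<forall>u\<in>set ls. length u = \<tau>"
  shows "concat (transpose ls) = concat (map (\<lambda>i. map (\<lambda>j. ls ! j ! i) [0..<length ls]) [0..<\<tau>])"
proof (cases "ls = []")
  case False
  then show ?thesis using assms by (subst transpose_rectangle[where n = \<tau>]) auto
qed simp

lemma length_concat_transpose:
  assumes "\<forall>u\<in>set ls. length u = \<tau>"
  shows "length (concat (transpose ls)) = \<tau> * length ls"
  unfolding concat_transpose_rectangle[OF assms] by (simp add: length_concat_map_upt)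

lemma nth_concat_transpose:
  assumes "\<forall>u\<in>set ls. length u = \<tau>" "i < \<tau>" "j < length ls"
  shows "concat (transpose ls) ! (i * length ls + j) = ls ! j ! i"
  unfolding concat_transpose_rectangle[OF assms(1)] using assms(2,3)
  by (simp add: nth_concat_map_upt)

lemma mset_concat_transpose:
  assumes "\<forall>u\<in>set ls. length u = \<tau>"
  shows "mset (concat (transpose ls)) = pi_monom (mset ls)"
proof -
  have mset_map_upt: "mset (map f [0..<n]) = (\<Sum>i<n. {#f i#})" for f :: "nat \<Rightarrow> nat" and n
    by (induction n) auto
  have "mset (concat (map (\<lambda>i. map (\<lambda>j. ls ! j ! i) [0..<length ls]) [0..<n]))
      = (\<Sum>i<n. \<Sum>j<length ls. {#ls ! j ! i#})" for n
    by (induction n) (simp_all add: mset_map_upt del: mset_map)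
  then have "mset (concat (transpose ls)) = (\<Sum>i<\<tau>. \<Sum>j<length ls. {#ls ! j ! i#})"
    unfolding concat_transpose_rectangle[OF assms] .
  also have "\<dots> = (\<Sum>j<length ls. \<Sum>i<\<tau>. {#ls ! j ! i#})" by (rule sum.swap)
  also have "\<dots> = (\<Sum>j<length ls. mset (ls ! j))"
  proof (rule sum.cong)
    fix j assume "j \<in> {..<length ls}"
    then have "length (ls ! j) = \<tau>" using assms by simp
    then show "(\<Sum>i<\<tau>. {#ls ! j ! i#}) = mset (ls ! j)"
      using mset_map_upt[of "\<lambda>i. ls ! j ! i" \<tau>] by (metis map_nth)
  qed simp
  also have "\<dots> = sum_list (map mset ls)" by (simp add: sum_list_sum_nth atLeast0LessThan)
  also have "\<dots> = pi_monom (mset ls)" by (metis pi_monom_def mset_map sum_mset_sum_list)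
  finally show ?thesis .
qed

lemma sorted_concat_transpose:
  assumes rows: "\<forall>u\<in>set ls. length u = \<tau> \<and> sorted u"
    and chain: "\<And>j j'. j \<le> j' \<Longrightarrow> j' < length ls \<Longrightarrow> sorted (interleave (ls ! j) (ls ! j'))"
  shows "sorted (concat (transpose ls))"
proof (subst sorted_iff_nth_mono, intro allI impI)
  let ?k = "length ls" and ?w = "concat (transpose ls)"
  have len: "\<forall>u\<in>set ls. length u = \<tau>" using rows by simp
  have below: "ls ! a ! t \<le> ls ! b ! t" if "a \<le> b" "b < ?k" "t < \<tau>" for a b t
    using sorted_interleave_nth(1)[OF chain[OF that(1,2)]] rows that by simp
  have wrap: "ls ! (?k - 1) ! t \<le> ls ! 0 ! Suc t" if "Suc t < \<tau>" "0 < ?k" for t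
    using sorted_interleave_nth(2)[OF chain[of 0 "?k - 1"]] rows that by simp
  fix p q assume pq: "p \<le> q" "q < length ?w"
  then have "q < \<tau> * ?k" by (simp add: length_concat_transpose[OF len])
  then have k: "0 < ?k" by (cases ?k) auto
  define i j i' j' where "i = p div ?k" and "j = p mod ?k" and "i' = q div ?k" and "j' = q mod ?k"
  have p: "p = i * ?k + j" and q: "q = i' * ?k + j'" by (simp_all add: i_def j_def i'_def j'_def)
  have jk: "j < ?k" "j' < ?k" using k by (simp_all add: j_def j'_def)
  have "i \<le> i'" "i' < \<tau>"
    using pq(1) \<open>q < \<tau> * ?k\<close> k by (simp_all add: i_def i'_def div_le_mono less_mult_imp_div_less)
  then have w: "?w ! p = ls ! j ! i" "?w ! q = ls ! j' ! i'"
    using nth_concat_transpose[OF len] jk p q by simp_all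
  show "?w ! p \<le> ?w ! q"
  proof (cases "i = i'")
    case True
    then show ?thesis using pq(1) p q jk below \<open>i' < \<tau>\<close> w by simp
  next
    case False
    with \<open>i \<le> i'\<close> have "Suc i \<le> i'" by simp
    have "ls ! j ! i \<le> ls ! (?k - 1) ! i" using below jk \<open>i' < \<tau>\<close> \<open>i \<le> i'\<close> by simp
    also have "\<dots> \<le> ls ! 0 ! Suc i" using wrap \<open>Suc i \<le> i'\<close> \<open>i' < \<tau>\<close> k by simp
    also have "\<dots> \<le> ls ! j' ! Suc i" using below jk \<open>Suc i \<le> i'\<close> \<open>i' < \<tau>\<close> by simp
    also have "\<dots> \<le> ls ! j' ! i'"
      using rows jk \<open>Suc i \<le> i'\<close> \<open>i' < \<tau>\<close> by (auto intro: sorted_nth_mono)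
    finally show ?thesis using w by simp
  qed
qed

lemma sorted_monom_if_pairwise_sorted:
  assumes rows: "\<forall>u\<in>#m. length u = \<tau> \<and> sorted u" and "pairwise_sorted m"
  shows "sorted_monom m"
proof -
  obtain ls where "mset ls = m" using ex_mset by blast
  define ls' where "ls' = sort_key sum_list ls"
  have "mset ls' = m" using \<open>mset ls = m\<close> by (simp add: ls'_def)
  moreover have "sorted (concat (transpose ls'))"
  proof (rule sorted_concat_transpose)
    show rows': "\<forall>u\<in>set ls'. length u = \<tau> \<and> sorted u"
      using rows \<open>mset ls' = m\<close> by (metis set_mset_mset)
    show "sorted (interleave (ls' ! j) (ls' ! j'))" if "j \<le> j'" "j' < length ls'" for j j'
      using rows' that assms(2) \<open>mset ls' = m\<close>
      by (intro sorted_interleave_sorted_by_sum) (auto simp: ls'_def)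
  qed
  ultimately show ?thesis unfolding sorted_monom_def by blast
qed

lemma sorted_monom_unique:
  assumes "0 < \<tau>" and len: "\<forall>u\<in>#m1. length u = \<tau>" "\<forall>u\<in>#m2. length u = \<tau>"
    and "sorted_monom m1" "sorted_monom m2" and pi: "pi_monom m1 = pi_monom m2"
  shows "m1 = m2"
proof -
  obtain ls1 ls2 where ls: "mset ls1 = m1" "mset ls2 = m2"
    and sorted: "sorted (concat (transpose ls1))" "sorted (concat (transpose ls2))"
    using assms(4,5) unfolding sorted_monom_def by blast
  have len': "\<forall>u\<in>set ls1. length u = \<tau>" "\<forall>u\<in>set ls2. length u = \<tau>"
    using len ls by auto
  have "mset (concat (transpose ls1)) = mset (concat (transpose ls2))"
    using pi ls by (simp add: mset_concat_transpose[OF len'(1)] mset_concat_transpose[OF len'(2)])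
  then have w: "concat (transpose ls1) = concat (transpose ls2)"
    using sorted by (metis properties_for_sort)
  then have "\<tau> * length ls1 = \<tau> * length ls2"
    by (metis length_concat_transpose[OF len'(1)] length_concat_transpose[OF len'(2)])
  then have k: "length ls1 = length ls2" using assms(1) by simp
  have "ls1 = ls2"
  proof (intro nth_equalityI[OF k] nth_equalityI)
    fix j i assume j: "j < length ls1" and i: "i < length (ls1 ! j)"
    then show "ls1 ! j ! i = ls2 ! j ! i"
      using nth_concat_transpose[OF len'(1), of i j] nth_concat_transpose[OF len'(2), of i j] w k len'
      by simp
  qed (use len' k in simp)
  then show ?thesis using ls by simp
qed

section \<open>The configuration is closed under sort-splitting\<close>

lemma half_diff_between:
  fixes n m :: nat
  shows "m div 2 \<le> (n + m + 1) div 2 - (n + 1) div 2" "(n + m + 1) div 2 - (n + 1) div 2 \<le> (m + 1) div 2"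
    and "m div 2 \<le> (n + m) div 2 - n div 2" "(n + m) div 2 - n div 2 \<le> (m + 1) div 2"
  by (cases "even n"; cases "even m"; auto elim!: evenE oddE)+

lemma half_sum_diff_bounds:
  fixes x1 x2 y1 y2 :: nat and lo hi :: int
  assumes "x1 \<le> y1" "x2 \<le> y2"
    and "lo \<le> int (y1 - x1)" "int (y1 - x1) \<le> hi" "lo \<le> int (y2 - x2)" "int (y2 - x2) \<le> hi"
  shows "lo \<le> int ((y1 + y2 + 1) div 2 - (x1 + x2 + 1) div 2)"
    and "int ((y1 + y2 + 1) div 2 - (x1 + x2 + 1) div 2) \<le> hi"
    and "lo \<le> int ((y1 + y2) div 2 - (x1 + x2) div 2)"
    and "int ((y1 + y2) div 2 - (x1 + x2) div 2) \<le> hi"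
proof -
  obtain a b where ab: "y1 = x1 + a" "y2 = x2 + b" using assms(1,2) le_Suc_ex by blast
  have "a + b \<le> 2 * ((a + b) div 2) + 1" "2 * ((a + b + 1) div 2) \<le> a + b + 1" by simp_all
  then have "int a + int b \<le> 2 * int ((a + b) div 2) + 1" "2 * int ((a + b + 1) div 2) \<le> int a + int b + 1"
    by linarith+
  then have lo: "lo \<le> int ((a + b) div 2)" and hi: "int ((a + b + 1) div 2) \<le> hi"
    using assms(3-6) unfolding ab by simp_all
  have "y1 + y2 + 1 = (x1 + x2) + (a + b) + 1" "y1 + y2 = (x1 + x2) + (a + b)" using ab by simp_all
  note between = half_diff_between[where n = "x1 + x2" and m = "a + b", folded this]
  show "lo \<le> int ((y1 + y2 + 1) div 2 - (x1 + x2 + 1) div 2)"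
    using lo of_nat_mono[OF between(1)] by (rule order_trans)
  show "int ((y1 + y2 + 1) div 2 - (x1 + x2 + 1) div 2) \<le> hi"
    using of_nat_mono[OF between(2)] hi by (rule order_trans)
  show "lo \<le> int ((y1 + y2) div 2 - (x1 + x2) div 2)"
    using lo of_nat_mono[OF between(3)] by (rule order_trans)
  show "int ((y1 + y2) div 2 - (x1 + x2) div 2) \<le> hi"
    using of_nat_mono[OF between(4)] hi by (rule order_trans)
qed

lemma mem_Vars_iff:
  assumes "\<forall>i\<in>{1..M}. 1 \<le> s i \<and> s i \<le> r i"
  shows "w \<in> Vars d \<tau> M b c r s \<longleftrightarrow> length w = \<tau> \<and> sorted w \<and> set w \<subseteq> {1..d} \<and>
    (\<forall>i\<in>{1..M}. c i \<le> int (count_atMost w (r i) - count_atMost w (s i - 1)) \<and>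
      int (count_atMost w (r i) - count_atMost w (s i - 1)) \<le> b i)"
proof -
  have interval: "(\<Sum>j=s i..r i. count (mset w) j) = count_atMost w (r i) - count_atMost w (s i - 1)"
    if "i \<in> {1..M}" for i
    using assms that by (intro sum_count_atLeastAtMost) auto
  have "(\<Sum>j=1..d. count (mset w) j) = \<tau>" "\<forall>j. j \<notin> {1..d} \<longrightarrow> count (mset w) j = 0"
    if "length w = \<tau>" "set w \<subseteq> {1..d}"
    using sum_count_set[of w "{1..d}"] that by (auto simp: count_mset count_list_0_iff)
  then show ?thesis
    unfolding Vars_def inConfig_def expvec_def mem_Collect_eq
    by (auto simp del: of_nat_sum simp: interval)
qed

lemma Vars_sort_split_closed:
  assumes \<alpha>: "\<alpha> \<in> Vars d \<tau> M b c r s" and \<beta>: "\<beta> \<in> Vars d \<tau> M b c r s"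
    and sr: "\<forall>i\<in>{1..M}. 1 \<le> s i \<and> s i \<le> r i"
  shows "oddpart \<tau> \<alpha> \<beta> \<in> Vars d \<tau> M b c r s \<and> evenpart \<tau> \<alpha> \<beta> \<in> Vars d \<tau> M b c r s"
proof -
  let ?cnt = "\<lambda>w i. count_atMost w (r i) - count_atMost w (s i - 1)"
  note Vars = mem_Vars_iff[OF sr]
  have len: "length \<alpha> = \<tau>" "length \<beta> = \<tau>" using \<alpha> \<beta> by (simp_all add: Vars)
  have "c i \<le> int (?cnt w i) \<and> int (?cnt w i) \<le> b i"
    if "w = oddpart \<tau> \<alpha> \<beta> \<or> w = evenpart \<tau> \<alpha> \<beta>" "i \<in> {1..M}" for w i
  proof -
    have "s i - 1 \<le> r i" using sr that(2) by (meson diff_le_self le_trans)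
    then have mono: "count_atMost \<alpha> (s i - 1) \<le> count_atMost \<alpha> (r i)"
      "count_atMost \<beta> (s i - 1) \<le> count_atMost \<beta> (r i)"
      by (simp_all add: count_atMost_mono)
    have "c i \<le> int (?cnt \<alpha> i)" "int (?cnt \<alpha> i) \<le> b i" "c i \<le> int (?cnt \<beta> i)" "int (?cnt \<beta> i) \<le> b i"
      using \<alpha> \<beta> that(2) by (simp_all add: Vars)
    note half = half_sum_diff_bounds[OF mono this]
    from that(1) show ?thesis
      by (elim disjE; hypsubst; unfold count_atMost_oddpart_evenpart[OF len]) (use half in blast)+
  qed
  moreover have "set (oddpart \<tau> \<alpha> \<beta>) \<subseteq> {1..d}" "set (evenpart \<tau> \<alpha> \<beta>) \<subseteq> {1..d}"
    using set_oddpart_union_evenpart[OF len] \<alpha> \<beta> by (auto simp: Vars)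
  ultimately show ?thesis using sorted_oddpart[OF len] sorted_evenpart[OF len] by (simp add: Vars)
qed

section \<open>Sortable sets of words\<close>

locale sortable =
  fixes V :: "nat list set" and \<tau> d :: nat
  assumes sorted_rows: "\<And>v. v \<in> V \<Longrightarrow> length v = \<tau> \<and> sorted v \<and> set v \<subseteq> {..d}"
    and sort_split_closed: "\<And>\<alpha> \<beta>. \<alpha> \<in> V \<Longrightarrow> \<beta> \<in> V \<Longrightarrow> oddpart \<tau> \<alpha> \<beta> \<in> V \<and> evenpart \<tau> \<alpha> \<beta> \<in> V"
    and tau_pos: "0 < \<tau>"
begin

lemma finite_V: "finite V"
proof (rule finite_subset)
  show "V \<subseteq> {xs. set xs \<subseteq> {..d} \<and> length xs = \<tau>}" using sorted_rows by blast
qed (simp add: finite_lists_length_eq)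

lemma nonsorted_quad_sort_split:
  assumes "nonsorted_quad V \<alpha> \<beta>"
  shows "\<alpha> \<in> V" "\<beta> \<in> V" "oddpart \<tau> \<alpha> \<beta> \<in> V" "evenpart \<tau> \<alpha> \<beta> \<in> V"
    and "mset (oddpart \<tau> \<alpha> \<beta>) + mset (evenpart \<tau> \<alpha> \<beta>) = mset \<alpha> + mset \<beta>"
    and "{#\<alpha>, \<beta>#} \<noteq> {#oddpart \<tau> \<alpha> \<beta>, evenpart \<tau> \<alpha> \<beta>#}"
proof -
  show \<alpha>\<beta>: "\<alpha> \<in> V" "\<beta> \<in> V" using assms by (simp_all add: nonsorted_quad_def)
  then show "oddpart \<tau> \<alpha> \<beta> \<in> V" "evenpart \<tau> \<alpha> \<beta> \<in> V" using sort_split_closed by simp_all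
  have len: "length \<alpha> = \<tau>" "length \<beta> = \<tau>" using \<alpha>\<beta> sorted_rows by simp_all
  then show "mset (oddpart \<tau> \<alpha> \<beta>) + mset (evenpart \<tau> \<alpha> \<beta>) = mset \<alpha> + mset \<beta>"
    by (rule mset_oddpart_evenpart)
  show "{#\<alpha>, \<beta>#} \<noteq> {#oddpart \<tau> \<alpha> \<beta>, evenpart \<tau> \<alpha> \<beta>#}"
    using sorted_monom_oddpart_evenpart[OF len] assms by (auto simp: nonsorted_quad_def)
qed

definition weight :: "monom \<Rightarrow> nat \<times> int" where
  "weight m = (\<Sum>v\<in>#m. potential d v)"

lemma weight_add [simp]: "weight (m1 + m2) = weight m1 + weight m2"
  by (simp add: weight_def)

lemma weight_sort_split_less:
  assumes "nonsorted_quad V \<alpha> \<beta>"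
  shows "weight {#oddpart \<tau> \<alpha> \<beta>, evenpart \<tau> \<alpha> \<beta>#} < weight {#\<alpha>, \<beta>#}"
proof -
  have "length \<alpha> = \<tau> \<and> sorted \<alpha> \<and> set \<alpha> \<subseteq> {..d}" "length \<beta> = \<tau> \<and> sorted \<beta> \<and> set \<beta> \<subseteq> {..d}"
    using sorted_rows nonsorted_quad_sort_split(1,2)[OF assms] by simp_all
  then show ?thesis
    using potential_sort_split_less nonsorted_quad_sort_split(6)[OF assms] by (simp add: weight_def)
qed

definition sort_split_step :: "monom \<Rightarrow> monom \<Rightarrow> bool" where
  "sort_split_step m m' \<longleftrightarrow> (\<exists>A \<alpha> \<beta>. nonsorted_quad V \<alpha> \<beta> \<and> m = A + {#\<alpha>, \<beta>#}
      \<and> m' = A + {#oddpart \<tau> \<alpha> \<beta>, evenpart \<tau> \<alpha> \<beta>#})"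

lemma sort_split_step_invariants:
  assumes "sort_split_step m m'" "set_mset m \<subseteq> V"
  shows "set_mset m' \<subseteq> V" "pi_monom m' = pi_monom m" "size m' = size m" "weight m' < weight m"
proof -
  obtain A \<alpha> \<beta> where q: "nonsorted_quad V \<alpha> \<beta>" and m: "m = A + {#\<alpha>, \<beta>#}"
    and m': "m' = A + {#oddpart \<tau> \<alpha> \<beta>, evenpart \<tau> \<alpha> \<beta>#}"
    using assms(1) unfolding sort_split_step_def by blast
  note split = nonsorted_quad_sort_split[OF q]
  show "set_mset m' \<subseteq> V" using assms(2) split(3,4) by (auto simp: m m')
  show "pi_monom m' = pi_monom m" unfolding m m' pi_monom_add pi_monom_pair split(5) ..
  show "size m' = size m" by (simp add: m m')
  show "weight m' < weight m"
    unfolding m m' weight_add by (rule add_strict_left_mono[OF weight_sort_split_less[OF q]])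
qed

lemma sort_split_steps_invariants:
  assumes "sort_split_step\<^sup>*\<^sup>* m s" "set_mset m \<subseteq> V"
  shows "set_mset s \<subseteq> V \<and> pi_monom s = pi_monom m \<and> size s = size m \<and> (s = m \<or> weight s < weight m)"
  using assms(1)
proof (induction rule: rtranclp_induct)
  case (step s s')
  then show ?case using sort_split_step_invariants[OF step.hyps(2)] by auto
qed (use assms(2) in simp)

lemma sort_split_step_if_not_pairwise_sorted:
  assumes "set_mset m \<subseteq> V" "\<not> pairwise_sorted m"
  obtains m' where "sort_split_step m m'"
proof -
  obtain \<alpha> \<beta> where sub: "{#\<alpha>, \<beta>#} \<subseteq># m" and "\<not> sorted_monom {#\<alpha>, \<beta>#}"
    using assms(2) unfolding pairwise_sorted_def by blast
  moreover have "\<alpha> \<in># m" "\<beta> \<in># m" using sub by (auto dest: mset_subset_eqD)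
  ultimately have "nonsorted_quad V \<alpha> \<beta>" using assms(1) by (auto simp: nonsorted_quad_def)
  moreover have "m = (m - {#\<alpha>, \<beta>#}) + {#\<alpha>, \<beta>#}" using sub by (rule subset_mset.diff_add[symmetric])
  ultimately show ?thesis using that unfolding sort_split_step_def by blast
qed

lemma sorted_monom_if_pairwise_sorted_V:
  "set_mset m \<subseteq> V \<Longrightarrow> pairwise_sorted m \<Longrightarrow> sorted_monom m"
  using sorted_rows by (intro sorted_monom_if_pairwise_sorted) auto

lemma sorted_monom_unique_V:
  "set_mset m1 \<subseteq> V \<Longrightarrow> set_mset m2 \<subseteq> V \<Longrightarrow> sorted_monom m1 \<Longrightarrow> sorted_monom m2 \<Longrightarrow>
    pi_monom m1 = pi_monom m2 \<Longrightarrow> m1 = m2"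
  using sorted_rows by (intro sorted_monom_unique[OF tau_pos]) auto

lemma reduces_to_sorted_monom:
  assumes "set_mset m \<subseteq> V"
  obtains s where "sort_split_step\<^sup>*\<^sup>* m s" "sorted_monom s"
proof -
  let ?R = "{s. sort_split_step\<^sup>*\<^sup>* m s}"
  have "?R \<subseteq> mset ` {xs. set xs \<subseteq> V \<and> length xs = size m}"
  proof
    fix s assume "s \<in> ?R"
    then have "set_mset s \<subseteq> V" "size s = size m"
      using sort_split_steps_invariants assms by auto
    then show "s \<in> mset ` {xs. set xs \<subseteq> V \<and> length xs = size m}"
      by (metis (mono_tags, lifting) ex_mset image_eqI mem_Collect_eq set_mset_mset size_mset)
  qed
  then have "finite ?R" by (rule finite_subset) (simp add: finite_lists_length_eq finite_V)
  moreover have "m \<in> ?R" by simp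
  ultimately obtain s where s: "s \<in> ?R" "weight s = Min (weight ` ?R)"
    by (metis (no_types, lifting) Min_in empty_iff finite_imageI image_iff image_is_empty)
  have "pairwise_sorted s"
  proof (rule ccontr)
    assume "\<not> pairwise_sorted s"
    moreover have "set_mset s \<subseteq> V" using s(1) sort_split_steps_invariants assms by auto
    ultimately obtain s' where "sort_split_step s s'" using sort_split_step_if_not_pairwise_sorted by blast
    then have "s' \<in> ?R" "weight s' < weight s"
      using s(1) sort_split_step_invariants \<open>set_mset s \<subseteq> V\<close> by auto
    then show False using s(2) \<open>finite ?R\<close> by (metis Min_le finite_imageI imageI leD)
  qed
  then show ?thesis
    using that s(1) sorted_monom_if_pairwise_sorted_V sort_split_steps_invariants assms by blast
qed

section \<open>The monomial order and the Groebner basis\<close>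

definition order_key :: "monom \<Rightarrow> nat multiset \<times> (nat \<times> int) \<times> monom" where
  "order_key m = (pi_monom m, weight m, m)"

definition monom_le :: "monom \<Rightarrow> monom \<Rightarrow> bool" where
  "monom_le m1 m2 \<longleftrightarrow> order_key m1 \<le> order_key m2"

lemma order_key_inj: "order_key m1 = order_key m2 \<Longrightarrow> m1 = m2"
  by (simp add: order_key_def)

lemma order_key_add: "order_key (m1 + m2) = order_key m1 + order_key m2"
  by (simp add: order_key_def)

lemma order_key_less_if_weight_less:
  "pi_monom m1 = pi_monom m2 \<Longrightarrow> weight m1 < weight m2 \<Longrightarrow> order_key m1 < order_key m2"
  by (simp add: order_key_def)

lemma pi_monom_eq_empty_iff:
  assumes "set_mset m \<subseteq> V"
  shows "pi_monom m = {#} \<longleftrightarrow> m = {#}"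
proof
  assume "pi_monom m = {#}"
  then have "\<forall>v\<in>#m. v = []" by (simp add: pi_monom_def)
  moreover have "\<forall>v\<in>#m. v \<noteq> []" using assms sorted_rows tau_pos by fastforce
  ultimately show "m = {#}" by fastforce
qed simp

lemma monomial_order_monom_le: "monomial_order V monom_le"
  unfolding monomial_order_def monom_le_def
proof (intro conjI allI impI)
  fix m assume "is_monom V m"
  then show "order_key {#} \<le> order_key m"
    using pi_monom_eq_empty_iff[of m] by (cases "m = {#}") (auto simp: is_monom_def order_key_def)
next
  fix m1 m2 m assume "is_monom V m1 \<and> is_monom V m2 \<and> is_monom V m \<and> order_key m1 \<le> order_key m2"
  then show "order_key (m1 + m) \<le> order_key (m2 + m)" by (simp add: order_key_add add_right_mono)
qed (auto intro: order_trans order_key_inj order.antisym)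

lemma lm_eqI:
  assumes "m \<in> Poly_Mapping.keys p" "\<forall>m'\<in>Poly_Mapping.keys p. order_key m' \<le> order_key m"
  shows "lm monom_le p = m"
  unfolding lm_def monom_le_def
  using assms by (intro the_equality) (auto intro: order_key_inj order.antisym)

lemma lm_max:
  assumes "p \<noteq> 0"
  shows "lm monom_le p \<in> Poly_Mapping.keys p"
    and "\<And>m'. m' \<in> Poly_Mapping.keys p \<Longrightarrow> order_key m' \<le> order_key (lm monom_le p)"
proof -
  let ?K = "order_key ` Poly_Mapping.keys p"
  have "Max ?K \<in> ?K" using assms by (intro Max_in) auto
  then obtain m where m: "m \<in> Poly_Mapping.keys p" "order_key m = Max ?K" by auto
  then have "\<forall>m'\<in>Poly_Mapping.keys p. order_key m' \<le> order_key m" by simp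
  with m(1) have "lm monom_le p = m" by (rule lm_eqI)
  then show "lm monom_le p \<in> Poly_Mapping.keys p" "\<And>m'. m' \<in> Poly_Mapping.keys p \<Longrightarrow>
      order_key m' \<le> order_key (lm monom_le p)"
    using m by simp_all
qed

lemma lookup_binom:
  "Poly_Mapping.lookup (binom \<tau> \<alpha> \<beta> :: 'k::comm_ring_1 ypoly) x =
    (if x = {#\<alpha>, \<beta>#} then 1 else 0) - (if x = {#oddpart \<tau> \<alpha> \<beta>, evenpart \<tau> \<alpha> \<beta>#} then 1 else 0)"
  by (simp add: binom_def lookup_minus lookup_single when_def)

lemma keys_binom:
  "nonsorted_quad V \<alpha> \<beta> \<Longrightarrow> Poly_Mapping.keys (binom \<tau> \<alpha> \<beta> :: 'k::field ypoly) =
    {{#\<alpha>, \<beta>#}, {#oddpart \<tau> \<alpha> \<beta>, evenpart \<tau> \<alpha> \<beta>#}}"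
  using nonsorted_quad_sort_split(6) not_sym[OF nonsorted_quad_sort_split(6)]
  by (auto simp: in_keys_iff lookup_binom split: if_splits)

lemma order_key_sort_split_less:
  assumes "nonsorted_quad V \<alpha> \<beta>"
  shows "order_key {#oddpart \<tau> \<alpha> \<beta>, evenpart \<tau> \<alpha> \<beta>#} < order_key {#\<alpha>, \<beta>#}"
  using nonsorted_quad_sort_split(5)[OF assms] weight_sort_split_less[OF assms]
  by (intro order_key_less_if_weight_less) simp_all

lemma lm_binom:
  "nonsorted_quad V \<alpha> \<beta> \<Longrightarrow> lm monom_le (binom \<tau> \<alpha> \<beta> :: 'k::field ypoly) = {#\<alpha>, \<beta>#}"
  using order_key_sort_split_less by (intro lm_eqI) (auto simp: keys_binom less_imp_le)

lemma binom_in_toricIdeal: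
  assumes q: "nonsorted_quad V \<alpha> \<beta>"
  shows "(binom \<tau> \<alpha> \<beta> :: 'k::field ypoly) \<in> toricIdeal V"
proof -
  note split = nonsorted_quad_sort_split[OF q]
  have "inKY V (binom \<tau> \<alpha> \<beta> :: 'k ypoly)"
    using split(1-4) by (auto simp: inKY_def is_monom_def keys_binom[OF q])
  moreover have "piY (binom \<tau> \<alpha> \<beta> :: 'k ypoly) =
      Poly_Mapping.single (pi_monom {#\<alpha>, \<beta>#}) 1 + Poly_Mapping.single (pi_monom {#\<alpha>, \<beta>#}) (-1)"
    using split(5,6) by (simp add: piY_def keys_binom[OF q] lookup_binom flip: pi_monom_def)
  ultimately show ?thesis by (simp add: toricIdeal_def flip: single_add)
qed

lemma binom_eq_if_pair_eq:
  assumes "nonsorted_quad V \<alpha> \<beta>" "{#\<alpha>', \<beta>'#} = {#\<alpha>, \<beta>#}"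
  shows "binom \<tau> \<alpha>' \<beta>' = binom \<tau> \<alpha> \<beta>" and "binom_move \<tau> \<alpha>' \<beta>' = binom_move \<tau> \<alpha> \<beta>"
proof -
  have "length \<alpha> = length \<beta>" using sorted_rows nonsorted_quad_sort_split(1,2)[OF assms(1)] by simp
  moreover have "\<alpha>' = \<alpha> \<and> \<beta>' = \<beta> \<or> \<alpha>' = \<beta> \<and> \<beta>' = \<alpha>"
    using assms(2) by (auto simp: add_eq_conv_ex)
  ultimately show "binom \<tau> \<alpha>' \<beta>' = binom \<tau> \<alpha> \<beta>" "binom_move \<tau> \<alpha>' \<beta>' = binom_move \<tau> \<alpha> \<beta>"
    by (auto simp: binom_def binom_move_def oddpart_commute evenpart_commute add_mset_commute)
qed

lemma toricIdeal_monom_partner: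
  assumes "f \<in> toricIdeal V" "m \<in> Poly_Mapping.keys f"
  obtains m' where "m' \<in> Poly_Mapping.keys f" "m' \<noteq> m" "pi_monom m' = pi_monom m"
proof (rule ccontr)
  assume "\<not> thesis"
  with that have alone: "pi_monom x \<noteq> pi_monom m" if "x \<in> Poly_Mapping.keys f" "x \<noteq> m" for x
    using that by blast
  have "Poly_Mapping.lookup (piY f) (pi_monom m) = (\<Sum>x\<in>Poly_Mapping.keys f.
      Poly_Mapping.lookup (Poly_Mapping.single (pi_monom x) (Poly_Mapping.lookup f x)) (pi_monom m))"
    by (simp add: piY_def pi_monom_def lookup_sum)
  also have "\<dots> = (\<Sum>x\<in>Poly_Mapping.keys f. if x = m then Poly_Mapping.lookup f m else 0)"
    by (rule sum.cong) (auto simp: lookup_single when_def dest: alone)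
  also have "\<dots> = Poly_Mapping.lookup f m" using assms(2) by simp
  finally show False using assms by (simp add: toricIdeal_def in_keys_iff)
qed

lemma lm_toricIdeal_not_pairwise_sorted:
  assumes f: "f \<in> toricIdeal V" "f \<noteq> 0"
  shows "\<not> pairwise_sorted (lm monom_le f)"
proof
  let ?m = "lm monom_le f"
  have monoms: "set_mset x \<subseteq> V" if "x \<in> Poly_Mapping.keys f" for x
    using f(1) that by (auto simp: toricIdeal_def inKY_def is_monom_def)
  assume "pairwise_sorted ?m"
  then have sorted_m: "sorted_monom ?m" using monoms[OF lm_max(1)[OF f(2)]]
    by (rule sorted_monom_if_pairwise_sorted_V[rotated])
  obtain m' where m': "m' \<in> Poly_Mapping.keys f" "m' \<noteq> ?m" "pi_monom m' = pi_monom ?m"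
    using toricIdeal_monom_partner[OF f(1) lm_max(1)[OF f(2)]] by blast
  obtain s where s: "sort_split_step\<^sup>*\<^sup>* m' s" "sorted_monom s"
    using reduces_to_sorted_monom[OF monoms[OF m'(1)]] by blast
  note inv = sort_split_steps_invariants[OF s(1) monoms[OF m'(1)]]
  have "s = ?m"
    using inv m'(3) sorted_m s(2) monoms[OF lm_max(1)[OF f(2)]] by (intro sorted_monom_unique_V) auto
  then have "order_key ?m < order_key m'"
    using inv m' by (intro order_key_less_if_weight_less) auto
  moreover have "order_key m' \<le> order_key ?m" using lm_max(2)[OF f(2) m'(1)] .
  ultimately show False by simp
qed

lemma finite_Gset: "finite (Gset V \<tau> :: 'k::comm_ring_1 ypoly set)"
proof (rule finite_subset)
  show "Gset V \<tau> \<subseteq> (\<lambda>(\<alpha>, \<beta>). binom \<tau> \<alpha> \<beta>) ` (V \<times> V)"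
    by (auto simp: Gset_def nonsorted_quad_def)
qed (simp add: finite_V)

lemma lm_toricIdeal_divisible_by_Gset:
  assumes "f \<in> toricIdeal V" "f \<noteq> 0"
  shows "\<exists>g\<in>(Gset V \<tau> :: 'k::field ypoly set). lm monom_le g \<subseteq># lm monom_le f"
proof -
  obtain \<alpha> \<beta> where sub: "{#\<alpha>, \<beta>#} \<subseteq># lm monom_le f" and "\<not> sorted_monom {#\<alpha>, \<beta>#}"
    using lm_toricIdeal_not_pairwise_sorted[OF assms] unfolding pairwise_sorted_def by blast
  moreover have "\<alpha> \<in># lm monom_le f" "\<beta> \<in># lm monom_le f"
    using sub by (auto dest: mset_subset_eqD)
  then have "\<alpha> \<in> V" "\<beta> \<in> V"
    using assms(1) lm_max(1)[OF assms(2)] by (auto simp: toricIdeal_def inKY_def is_monom_def)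
  ultimately have "nonsorted_quad V \<alpha> \<beta>" by (simp add: nonsorted_quad_def)
  then show ?thesis
    using sub by (intro bexI[where x = "binom \<tau> \<alpha> \<beta> :: 'k ypoly"]) (auto simp: Gset_def lm_binom)
qed

lemma lm_Gset_not_dvd_other_monom:
  assumes "g \<in> Gset V \<tau>" "g' \<in> Gset V \<tau>" "g \<noteq> g'" "m \<in> Poly_Mapping.keys g"
  shows "\<not> lm monom_le (g' :: 'k::field ypoly) \<subseteq># m"
proof
  obtain \<alpha> \<beta> where q: "nonsorted_quad V \<alpha> \<beta>" and g_eq: "g = binom \<tau> \<alpha> \<beta>"
    using assms(1) by (auto simp: Gset_def)
  obtain \<alpha>' \<beta>' where q': "nonsorted_quad V \<alpha>' \<beta>'" and g'_eq: "g' = binom \<tau> \<alpha>' \<beta>'"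
    using assms(2) by (auto simp: Gset_def)
  have m_cases: "m = {#\<alpha>, \<beta>#} \<or> m = {#oddpart \<tau> \<alpha> \<beta>, evenpart \<tau> \<alpha> \<beta>#}"
    using assms(4) by (simp add: g_eq keys_binom[OF q])
  assume "lm monom_le g' \<subseteq># m"
  moreover have "size m = size (lm monom_le g')" using m_cases by (auto simp: g'_eq lm_binom[OF q'])
  ultimately have m_eq: "{#\<alpha>', \<beta>'#} = m"
    by (metis g'_eq lm_binom[OF q'] mset_subset_size subset_mset.le_less less_irrefl)
  from m_cases show False
  proof
    assume "m = {#\<alpha>, \<beta>#}"
    then have "g' = g"
      unfolding g_eq g'_eq using m_eq by (intro binom_eq_if_pair_eq(1)[OF q]) simp
    then show False using assms(3) by simp
  next
    assume "m = {#oddpart \<tau> \<alpha> \<beta>, evenpart \<tau> \<alpha> \<beta>#}"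
    moreover have "length \<alpha> = \<tau>" "length \<beta> = \<tau>"
      using sorted_rows nonsorted_quad_sort_split(1,2)[OF q] by simp_all
    ultimately show False using q' m_eq sorted_monom_oddpart_evenpart by (simp add: nonsorted_quad_def)
  qed
qed

lemma reduced_groebner_basis_Gset:
  "reduced_groebner_basis monom_le (toricIdeal V :: 'k::field ypoly set) (Gset V \<tau>)"
  unfolding reduced_groebner_basis_def groebner_basis_def
proof (intro conjI ballI impI)
  show "(Gset V \<tau> :: 'k ypoly set) \<subseteq> toricIdeal V"
    by (auto simp: Gset_def binom_in_toricIdeal)
  show "(0 :: 'k ypoly) \<notin> Gset V \<tau>"
  proof
    assume "(0 :: 'k ypoly) \<in> Gset V \<tau>"
    then obtain \<alpha> \<beta> where q: "nonsorted_quad V \<alpha> \<beta>" and "binom \<tau> \<alpha> \<beta> = (0 :: 'k ypoly)"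
      unfolding Gset_def by auto
    then show False using keys_binom[OF q, where 'k = 'k] by simp
  qed
next
  fix g :: "'k ypoly" assume "g \<in> Gset V \<tau>"
  then obtain \<alpha> \<beta> where q: "nonsorted_quad V \<alpha> \<beta>" and g: "g = binom \<tau> \<alpha> \<beta>"
    unfolding Gset_def by auto
  show "Poly_Mapping.lookup g (lm monom_le g) = 1"
    using nonsorted_quad_sort_split(6)[OF q] by (simp add: g lm_binom[OF q] lookup_binom)
qed (simp_all add: finite_Gset lm_toricIdeal_divisible_by_Gset lm_Gset_not_dvd_other_monom)

section \<open>The Markov basis\<close>

definition count_vec :: "monom \<Rightarrow> nat list \<Rightarrow> int" where
  "count_vec m = (\<lambda>v. int (count m v))"

definition monom_of_vec :: "(nat list \<Rightarrow> int) \<Rightarrow> monom" where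
  "monom_of_vec x = (\<Sum>v\<in>V. replicate_mset (nat (x v)) v)"

lemma count_vec_inj: "count_vec m1 = count_vec m2 \<Longrightarrow> m1 = m2"
  unfolding count_vec_def by (metis multiset_eqI of_nat_eq_iff)

lemma Amap_count_vec: "set_mset m \<subseteq> V \<Longrightarrow> Amap V (count_vec m) = (\<lambda>j. int (count (pi_monom m) j))"
proof (induction m)
  case (add x m)
  then have "x \<in> V" "set_mset m \<subseteq> V" by auto
  have "Amap V (count_vec (add_mset x m)) j = (\<Sum>v\<in>V. int (count m v) * int (expvec v j))
      + (\<Sum>v\<in>V. if v = x then int (expvec v j) else 0)" for j
    unfolding Amap_def count_vec_def sum.distrib[symmetric] by (rule sum.cong) (auto simp: algebra_simps)
  then have "Amap V (count_vec (add_mset x m)) j = Amap V (count_vec m) j + int (expvec x j)" for j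
    using \<open>x \<in> V\<close> finite_V by (simp add: Amap_def count_vec_def)
  then show ?case
    using add.IH[OF \<open>set_mset m \<subseteq> V\<close>] by (simp add: pi_monom_def expvec_def add.commute)
qed (simp add: Amap_def count_vec_def)

lemma count_vec_in_fiber: "set_mset m \<subseteq> V \<Longrightarrow> count_vec m \<in> fiber V (Amap V (count_vec m))"
  unfolding fiber_def count_vec_def by (auto simp flip: count_greater_zero_iff)

lemma Amap_eq_if_pi_monom_eq:
  "set_mset m1 \<subseteq> V \<Longrightarrow> set_mset m2 \<subseteq> V \<Longrightarrow> pi_monom m1 = pi_monom m2 \<Longrightarrow>
    Amap V (count_vec m1) = Amap V (count_vec m2)"
  by (simp add: Amap_count_vec)

lemma monom_of_vec_fiber:
  assumes "x \<in> fiber V t"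
  shows "count_vec (monom_of_vec x) = x" "set_mset (monom_of_vec x) \<subseteq> V"
proof -
  have count: "count (monom_of_vec x) u = (if u \<in> V then nat (x u) else 0)" for u
    unfolding monom_of_vec_def using finite_V by (simp add: count_sum count_replicate_mset)
  show "count_vec (monom_of_vec x) = x"
    using assms unfolding fiber_def count_vec_def by (auto simp: count)
  show "set_mset (monom_of_vec x) \<subseteq> V"
    by (auto simp: count simp flip: count_greater_zero_iff split: if_splits)
qed

lemma binom_move_conv_count_vec:
  "binom_move \<tau> \<alpha> \<beta> = (\<lambda>v. count_vec {#\<alpha>, \<beta>#} v
    - count_vec {#oddpart \<tau> \<alpha> \<beta>, evenpart \<tau> \<alpha> \<beta>#} v)"
  by (simp add: binom_move_def count_vec_def)

lemma is_move_binom_move: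
  assumes q: "nonsorted_quad V \<alpha> \<beta>"
  shows "is_move V (binom_move \<tau> \<alpha> \<beta>)"
proof -
  note split = nonsorted_quad_sort_split[OF q]
  let ?A = "{#\<alpha>, \<beta>#}" and ?B = "{#oddpart \<tau> \<alpha> \<beta>, evenpart \<tau> \<alpha> \<beta>#}"
  have V: "set_mset ?A \<subseteq> V" "set_mset ?B \<subseteq> V" using split(1-4) by auto
  have "Amap V (binom_move \<tau> \<alpha> \<beta>) = (\<lambda>j. Amap V (count_vec ?A) j - Amap V (count_vec ?B) j)"
    by (simp add: binom_move_conv_count_vec Amap_def left_diff_distrib sum_subtractf)
  also have "\<dots> = (\<lambda>_. 0)" using Amap_eq_if_pi_monom_eq[OF V] split(5) by simp
  finally show ?thesis
    using split(1-4) by (auto simp: is_move_def binom_move_def)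
qed

lemma markov_step_sym: "(x, y) \<in> markov_step V t B \<Longrightarrow> (y, x) \<in> markov_step V t B"
  unfolding markov_step_def by force

lemma markov_step_sort_split:
  assumes "sort_split_step m m'" "set_mset m \<subseteq> V"
  shows "(count_vec m, count_vec m') \<in> markov_step V (Amap V (count_vec m)) (Bset V \<tau>)"
proof -
  obtain A \<alpha> \<beta> where q: "nonsorted_quad V \<alpha> \<beta>" and m: "m = A + {#\<alpha>, \<beta>#}"
    and m': "m' = A + {#oddpart \<tau> \<alpha> \<beta>, evenpart \<tau> \<alpha> \<beta>#}"
    using assms(1) unfolding sort_split_step_def by blast
  note inv = sort_split_step_invariants[OF assms]
  have "count_vec m' = (\<lambda>v. count_vec m v - binom_move \<tau> \<alpha> \<beta> v)"
    unfolding m m' count_vec_def binom_move_def by (auto simp: algebra_simps)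
  moreover have "binom_move \<tau> \<alpha> \<beta> \<in> Bset V \<tau>" using q by (auto simp: Bset_def)
  moreover have "count_vec m' \<in> fiber V (Amap V (count_vec m))"
    using count_vec_in_fiber[OF inv(1)] Amap_eq_if_pi_monom_eq[OF inv(1) assms(2) inv(2)] by simp
  ultimately show ?thesis
    using count_vec_in_fiber[OF assms(2)] unfolding markov_step_def by blast
qed

lemma markov_steps_sort_split:
  assumes "sort_split_step\<^sup>*\<^sup>* m s" "set_mset m \<subseteq> V"
  shows "(count_vec m, count_vec s) \<in> (markov_step V (Amap V (count_vec m)) (Bset V \<tau>))\<^sup>*"
  using assms(1)
proof (induction rule: rtranclp_induct)
  case (step s s')
  note inv = sort_split_steps_invariants[OF step.hyps(1) assms(2)]
  have "(count_vec s, count_vec s') \<in> markov_step V (Amap V (count_vec m)) (Bset V \<tau>)"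
    using markov_step_sort_split[OF step.hyps(2)] Amap_eq_if_pi_monom_eq[OF _ assms(2)] inv
    by metis
  with step.IH show ?case by (rule rtrancl_into_rtrancl)
qed simp

lemma markov_basis_Bset: "markov_basis V (Bset V \<tau>)"
  unfolding markov_basis_def
proof (intro conjI ballI allI)
  show "finite (Bset V \<tau>)"
  proof (rule finite_subset)
    show "Bset V \<tau> \<subseteq> (\<lambda>(\<alpha>, \<beta>). binom_move \<tau> \<alpha> \<beta>) ` (V \<times> V)"
      by (auto simp: Bset_def nonsorted_quad_def)
  qed (simp add: finite_V)
  show "is_move V z" if "z \<in> Bset V \<tau>" for z
    using that is_move_binom_move by (auto simp: Bset_def)
next
  fix t x y assume x: "x \<in> fiber V t" and y: "y \<in> fiber V t"
  let ?R = "markov_step V t (Bset V \<tau>)"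
  have connect: "(x, count_vec s) \<in> ?R\<^sup>*" "pi_monom s = pi_monom (monom_of_vec x)" "set_mset s \<subseteq> V"
    if "x \<in> fiber V t" "sort_split_step\<^sup>*\<^sup>* (monom_of_vec x) s" for x s
  proof -
    note x = monom_of_vec_fiber[OF that(1)]
    have "Amap V (count_vec (monom_of_vec x)) = t" using that(1) x by (simp add: fiber_def)
    then show "(x, count_vec s) \<in> ?R\<^sup>*" using markov_steps_sort_split[OF that(2) x(2)] x by simp
    show "pi_monom s = pi_monom (monom_of_vec x)" "set_mset s \<subseteq> V"
      using sort_split_steps_invariants[OF that(2) x(2)] by simp_all
  qed
  obtain sx where sx: "sort_split_step\<^sup>*\<^sup>* (monom_of_vec x) sx" "sorted_monom sx"
    using reduces_to_sorted_monom[OF monom_of_vec_fiber(2)[OF x]] by blast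
  obtain sy where sy: "sort_split_step\<^sup>*\<^sup>* (monom_of_vec y) sy" "sorted_monom sy"
    using reduces_to_sorted_monom[OF monom_of_vec_fiber(2)[OF y]] by blast
  have "Amap V (count_vec (monom_of_vec x)) = Amap V (count_vec (monom_of_vec y))"
    using x y by (simp add: fiber_def monom_of_vec_fiber)
  then have "pi_monom (monom_of_vec x) = pi_monom (monom_of_vec y)"
    unfolding Amap_count_vec[OF monom_of_vec_fiber(2)[OF x]] Amap_count_vec[OF monom_of_vec_fiber(2)[OF y]]
    by (simp add: fun_eq_iff multiset_eq_iff)
  then have "sx = sy"
    using connect[OF x sx(1)] connect[OF y sy(1)] sx(2) sy(2) by (intro sorted_monom_unique_V) auto
  moreover have "(count_vec sy, y) \<in> ?R\<^sup>*"
    using connect(1)[OF y sy(1)] sym_rtrancl[of ?R] markov_step_sym by (auto simp: sym_def dest: symD)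
  ultimately show "(x, y) \<in> ?R\<^sup>*" using connect(1)[OF x sx(1)] by simp
qed

lemma sort_split_disjoint:
  assumes q: "nonsorted_quad V \<alpha> \<beta>" and v: "v \<in># {#\<alpha>, \<beta>#}"
  shows "v \<notin># {#oddpart \<tau> \<alpha> \<beta>, evenpart \<tau> \<alpha> \<beta>#}"
proof
  note split = nonsorted_quad_sort_split[OF q]
  assume "v \<in># {#oddpart \<tau> \<alpha> \<beta>, evenpart \<tau> \<alpha> \<beta>#}"
  then obtain y where y: "{#oddpart \<tau> \<alpha> \<beta>, evenpart \<tau> \<alpha> \<beta>#} = {#v, y#}" "y \<in> V"
    using split(3,4) by (auto simp: add_mset_commute)
  obtain x where x: "{#\<alpha>, \<beta>#} = {#v, x#}" "x \<in> V"
    using v split(1,2) by (auto simp: add_mset_commute)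
  have "mset v + mset y = mset v + mset x"
    using split(5) pi_monom_pair[of v y] pi_monom_pair[of v x] x(1) y(1) by (metis pi_monom_pair)
  then have "x = y"
    using sorted_rows[OF x(2)] sorted_rows[OF y(2)] by (metis add_left_cancel properties_for_sort sorted_sort_id)
  then show False using split(6) x(1) y(1) by simp
qed

lemma subset_mset_if_shift_nonneg:
  assumes "\<And>v. 0 \<le> int (count M v) - int (count N v) + int (count P v)" "\<And>v. v \<in># N \<Longrightarrow> v \<notin># P"
  shows "N \<subseteq># M"
proof (rule mset_subset_eqI)
  fix v show "count N v \<le> count M v"
    using assms[of v] by (cases "v \<in># N") (auto simp: not_in_iff)
qed

lemma binom_move_eq_if_applicable:
  assumes q: "nonsorted_quad V \<alpha> \<beta>" and q': "nonsorted_quad V \<alpha>' \<beta>'"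
    and applicable: "(\<forall>v. 0 \<le> count_vec {#\<alpha>, \<beta>#} v - binom_move \<tau> \<alpha>' \<beta>' v) \<or>
      (\<forall>v. 0 \<le> count_vec {#\<alpha>, \<beta>#} v + binom_move \<tau> \<alpha>' \<beta>' v)"
  shows "binom_move \<tau> \<alpha>' \<beta>' = binom_move \<tau> \<alpha> \<beta>"
proof -
  let ?A = "{#\<alpha>, \<beta>#}" and ?A' = "{#\<alpha>', \<beta>'#}"
    and ?B' = "{#oddpart \<tau> \<alpha>' \<beta>', evenpart \<tau> \<alpha>' \<beta>'#}"
  have size_eq: "N \<subseteq># ?A \<Longrightarrow> size N = size ?A \<Longrightarrow> N = ?A" for N
    using mset_subset_size subset_mset.le_less by fastforce
  from applicable show ?thesis
  proof
    assume nonneg: "\<forall>v. 0 \<le> count_vec ?A v - binom_move \<tau> \<alpha>' \<beta>' v"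
    have "?A' \<subseteq># ?A"
    proof (rule subset_mset_if_shift_nonneg[where P = ?B'])
      show "0 \<le> int (count ?A v) - int (count ?A' v) + int (count ?B' v)" for v
        using nonneg[rule_format, of v] by (simp add: count_vec_def binom_move_def)
    qed (rule sort_split_disjoint[OF q'])
    then have "?A' = ?A" by (rule size_eq) simp
    then show ?thesis by (rule binom_eq_if_pair_eq(2)[OF q])
  next
    assume nonneg: "\<forall>v. 0 \<le> count_vec ?A v + binom_move \<tau> \<alpha>' \<beta>' v"
    have "?B' \<subseteq># ?A"
    proof (rule subset_mset_if_shift_nonneg[where P = ?A'])
      show "0 \<le> int (count ?A v) - int (count ?B' v) + int (count ?A' v)" for v
        using nonneg[rule_format, of v] by (simp add: count_vec_def binom_move_def)
    qed (use sort_split_disjoint[OF q'] in blast)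
    then have "?B' = ?A" by (rule size_eq) simp
    moreover have "sorted_monom ?B'"
      using sorted_rows nonsorted_quad_sort_split(1,2)[OF q'] by (intro sorted_monom_oddpart_evenpart) simp_all
    ultimately show ?thesis using q by (simp add: nonsorted_quad_def)
  qed
qed

lemma minimal_markov_basis_Bset: "minimal_markov_basis V (Bset V \<tau>)"
  unfolding minimal_markov_basis_def
proof (intro conjI allI impI notI)
  show "markov_basis V (Bset V \<tau>)" by (rule markov_basis_Bset)
  fix B' assume sub: "B' \<subset> Bset V \<tau>" and mb: "markov_basis V B'"
  obtain \<alpha> \<beta> where q: "nonsorted_quad V \<alpha> \<beta>" and missing: "binom_move \<tau> \<alpha> \<beta> \<notin> B'"
    using sub by (auto simp: Bset_def)
  note split = nonsorted_quad_sort_split[OF q]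
  let ?A = "{#\<alpha>, \<beta>#}" and ?B = "{#oddpart \<tau> \<alpha> \<beta>, evenpart \<tau> \<alpha> \<beta>#}"
  let ?t = "Amap V (count_vec ?A)"
  have V: "set_mset ?A \<subseteq> V" "set_mset ?B \<subseteq> V" using split(1-4) by auto
  have "count_vec ?A \<in> fiber V ?t" "count_vec ?B \<in> fiber V ?t"
    using count_vec_in_fiber[OF V(1)] count_vec_in_fiber[OF V(2)]
      Amap_eq_if_pi_monom_eq[OF V(2,1)] split(5) by simp_all
  then have "(count_vec ?A, count_vec ?B) \<in> (markov_step V ?t B')\<^sup>*"
    using mb by (simp add: markov_basis_def)
  moreover have "count_vec ?A \<noteq> count_vec ?B" using split(6) count_vec_inj by blast
  ultimately obtain x where "(count_vec ?A, x) \<in> markov_step V ?t B'"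
    by (metis converse_rtranclE)
  then obtain z where z: "z \<in> B'" "x = (\<lambda>v. count_vec ?A v + z v) \<or> x = (\<lambda>v. count_vec ?A v - z v)"
    and nonneg: "\<And>v. 0 \<le> x v" by (auto simp: markov_step_def fiber_def)
  have "z \<in> Bset V \<tau>" using z(1) sub by blast
  then obtain \<alpha>' \<beta>' where q': "nonsorted_quad V \<alpha>' \<beta>'" and z_eq: "z = binom_move \<tau> \<alpha>' \<beta>'"
    unfolding Bset_def by blast
  have "z = binom_move \<tau> \<alpha> \<beta>"
    unfolding z_eq using z(2) nonneg by (intro binom_move_eq_if_applicable[OF q q']) (auto simp: z_eq)
  then show False using z(1) missing by simp
qed

end

theorem theorem1:
  fixes \<tau> M d :: nat and b c :: "nat \<Rightarrow> int" and r s :: "nat \<Rightarrow> nat"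
  assumes "\<tau> \<ge> 2" and "M \<ge> 1" and "d \<ge> 1"
    and "\<forall>i\<in>{1..M}. 0 \<le> c i \<and> c i \<le> b i"
    and "\<forall>i\<in>{1..M}. 1 \<le> s i \<and> s i \<le> r i \<and> r i \<le> d"
  shows "let V = Vars d \<tau> M b c r s in
    \<exists>le. monomial_order V le \<and>
      reduced_groebner_basis le (toricIdeal V :: ('k::field) ypoly set) (Gset V \<tau>) \<and>
      (\<forall>\<alpha> \<beta>. nonsorted_quad V \<alpha> \<beta> \<longrightarrow> lm le (binom \<tau> \<alpha> \<beta> :: 'k ypoly) = {#\<alpha>, \<beta>#}) \<and>
      minimal_markov_basis V (Bset V \<tau>)"
proof -
  define V where "V = Vars d \<tau> M b c r s"
  have "sortable V \<tau> d"
  proof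
    show "length v = \<tau> \<and> sorted v \<and> set v \<subseteq> {..d}" if "v \<in> V" for v
      using that by (auto simp: V_def Vars_def)
    show "oddpart \<tau> \<alpha> \<beta> \<in> V \<and> evenpart \<tau> \<alpha> \<beta> \<in> V" if "\<alpha> \<in> V" "\<beta> \<in> V" for \<alpha> \<beta>
      using Vars_sort_split_closed that assms(5) by (simp add: V_def)
    show "0 < \<tau>" using assms(1) by simp
  qed
  then interpret sortable V \<tau> d .
  show ?thesis
    unfolding Let_def V_def[symmetric]
    using monomial_order_monom_le reduced_groebner_basis_Gset lm_binom minimal_markov_basis_Bset by blast
qed

end
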